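(* Let $v_i:\mathbb{R}\to\mathbb{C}$ be smooth with $\mathrm{supp}(v_i)\subseteq[-r,r]$, $\sup_t|v_i(t)|\le C_0$ and $\sup_t|\partial_t^{j_{\max}+1}v_i(t)|\le D_{j_{\max}+1}$. Let $0<\eta\le1$ and $j_{\max}\in\mathbb{N}_0$, and let $K_i^{(-,+)}$, $\tilde K_i^{(-,+)}$ be as in the context. Then for all $s,s'$, $$|\tilde K_i^{(-,+)}(s,s')-K_i^{(-,+)}(s,s')|\le\frac{2\eta^{j_{\max}+1}D_{j_{\max}+1}C_0r}{(j_{\max}+1)!},$$ for all $t>0$, $$\int_0^t\!\!\int_0^t|\tilde K_i^{(-,+)}(s,s')-K_i^{(-,+)}(s,s')|\,ds\,ds'\le4t\eta^{j_{\max}+1}D_{j_{\max}+1}\frac{2r+\eta}{(j_{\max}+1)!}C_0r,$$ and for all $s$, $$\int_{-\infty}^\infty|\tilde K_i^{(-,+)}(s,s')|\,ds'\le2C_0^2(j_{\max}+1)(2r+1)^2 .$$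
   Context: Discretization: for $n\in\mathbb{Z}$ and $j\ge0$ let $P_j^n(s)=\sqrt{(2j+1)/\eta}\,L_j\big(2\frac{s-n\eta}{\eta}-1\big)$ for $s\in[n\eta,(n+1)\eta)$ and $P_j^n(s)=0$ otherwise, where $L_j$ is the $j$-th Legendre polynomial (so $\int P_j^nP_{j'}^{n'}=\delta_{nn'}\delta_{jj'}$). Define $C_{i,j}^n(t)=\int_{n\eta}^{(n+1)\eta}v_i(t-s)P_j^n(s)\,ds$. The original (vacuum) memory kernel is $K_i^{(-,+)}(s,s')=\int_{-\infty}^\infty v_i(s-\tau)v_i^*(s'-\tau)\,d\tau$ and the discretized kernel is $\tilde K_i^{(-,+)}(s,s')=\sum_{n\in\mathbb{Z}}\sum_{j=0}^{j_{\max}}C_{i,j}^n(s)C_{i,j}^{n*}(s')$. *)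

theory Defs
  imports "HOL-Analysis.Analysis"
begin

fun legendre :: "nat \<Rightarrow> real \<Rightarrow> real" where
  "legendre 0 x = 1"
| "legendre (Suc 0) x = x"
| "legendre (Suc (Suc n)) x =
     ((2 * real n + 3) * x * legendre (Suc n) x - (real n + 1) * legendre n x) / (real n + 2)"

definition nderiv :: "nat \<Rightarrow> (real \<Rightarrow> complex) \<Rightarrow> real \<Rightarrow> complex" where
  "nderiv k f = ((\<lambda>g t. vector_derivative g (at t)) ^^ k) f"

definition smooth_fun :: "(real \<Rightarrow> complex) \<Rightarrow> bool" where
  "smooth_fun f \<longleftrightarrow> (\<forall>k t. nderiv k f differentiable (at t))"

definition Pbasis :: "real \<Rightarrow> int \<Rightarrow> nat \<Rightarrow> real \<Rightarrow> real" where
  "Pbasis \<eta> n j s =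
     (if of_int n * \<eta> \<le> s \<and> s < (of_int n + 1) * \<eta>
      then sqrt ((2 * real j + 1) / \<eta>) * legendre j (2 * ((s - of_int n * \<eta>) / \<eta>) - 1)
      else 0)"

definition Ccoef :: "(real \<Rightarrow> complex) \<Rightarrow> real \<Rightarrow> int \<Rightarrow> nat \<Rightarrow> real \<Rightarrow> complex" where
  "Ccoef v \<eta> n j t =
     integral {of_int n * \<eta> .. (of_int n + 1) * \<eta>} (\<lambda>s. v (t - s) * complex_of_real (Pbasis \<eta> n j s))"

definition Kvac :: "(real \<Rightarrow> complex) \<Rightarrow> real \<Rightarrow> real \<Rightarrow> complex" where
  "Kvac v s s' = integral UNIV (\<lambda>\<tau>. v (s - \<tau>) * cnj (v (s' - \<tau>)))"

definition Kdisc :: "(real \<Rightarrow> complex) \<Rightarrow> real \<Rightarrow> nat \<Rightarrow> real \<Rightarrow> real \<Rightarrow> complex" where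
  "Kdisc v \<eta> jmax s s' =
     (\<Sum>\<^sub>\<infinity>n::int. \<Sum>j\<le>jmax. Ccoef v \<eta> n j s * cnj (Ccoef v \<eta> n j s'))"

end

theory Submission
  imports Defs
begin

(*
  On the cell I_n = [n \<eta>, (n + 1) \<eta>] write f = v (s - _) and g = v (s' - _). The n-th term of the
  discretised kernel is the inner product of the Legendre coefficient vectors of f and g, i.e. the
  L2(I_n) inner product of g with the orthogonal projection P f of f onto polynomials of degree at
  most jmax, whereas the vacuum kernel is the sum over n of the L2(I_n) inner products of f and g.
  So the error is minus the sum of the inner products of f - P f with g. Since f - P f = h - P h
  with h = f - q for every polynomial q, Bessel's inequality and a weighted AM-GM inequality bound
  it by (t A + B / t) / 2 for all t > 0, where A is the squared L2 distance from f to the chosen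
  polynomials and B the squared L2 norm of g; optimising t gives sqrt (A B).  We have B \<le> 2 r C0^2,
  and A \<le> 2 r (D \<eta>^(jmax+1) / (jmax+1)!)^2: if \<eta> \<le> r take q the Taylor polynomial of f at the
  midpoint of I_n (only about 2 r / \<eta> cells meet the support); if r < \<eta> take q = 0 and expand v
  around the edge of its support, where all derivatives vanish.  The error vanishes for
  |s - s'| > 2 r + \<eta>, which gives the double integral bound, and the last bound follows from
  |C_{i,j}^n| \<le> C0 sqrt \<eta> and the same count of cells.
*)

section \<open>Legendre polynomials\<close>

lemma legendre_recurrence:
  "(real n + 2) * legendre (Suc (Suc n)) x =
     (2 * real n + 3) * x * legendre (Suc n) x - (real n + 1) * legendre n x"
proof -
  have "real n + 2 \<noteq> 0" by simp
  then show ?thesis by (simp add: field_simps)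
qed

text \<open>The derivative \<open>L\<^sub>n'\<close>, defined through the classical identity
  \<open>L\<^sub>n\<^sub>+\<^sub>1' = x L\<^sub>n' + (n + 1) L\<^sub>n\<close>; \<open>has_real_derivative_legendre\<close> justifies the name.\<close>
fun legendre_deriv :: "nat \<Rightarrow> real \<Rightarrow> real" where
  "legendre_deriv 0 x = 0"
| "legendre_deriv (Suc n) x = x * legendre_deriv n x + real (Suc n) * legendre n x"

lemma legendre_deriv_weighted_of_recurrence:
  assumes "x * legendre_deriv (Suc n) x - legendre_deriv n x = real (Suc n) * legendre (Suc n) x"
  shows "(x\<^sup>2 - 1) * legendre_deriv (Suc n) x = real (Suc n) * (x * legendre (Suc n) x - legendre n x)"
proof -
  have "(x\<^sup>2 - 1) * legendre_deriv (Suc n) x = x * (x * legendre_deriv (Suc n) x) - legendre_deriv (Suc n) x"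
    by (simp add: algebra_simps power2_eq_square)
  also have "\<dots> = x * (legendre_deriv n x + real (Suc n) * legendre (Suc n) x)
      - (x * legendre_deriv n x + real (Suc n) * legendre n x)"
    using assms by (simp add: algebra_simps)
  finally show ?thesis by (simp add: algebra_simps)
qed

lemma legendre_deriv_recurrence:
  "x * legendre_deriv (Suc n) x - legendre_deriv n x = real (Suc n) * legendre (Suc n) x"
proof (induction n)
  case 0
  then show ?case by simp
next
  case (Suc n)
  have "x * legendre_deriv (Suc (Suc n)) x - legendre_deriv (Suc n) x
      = (x\<^sup>2 - 1) * legendre_deriv (Suc n) x + real (Suc (Suc n)) * x * legendre (Suc n) x"
    by (simp add: algebra_simps power2_eq_square)
  also have "\<dots> = (2 * real n + 3) * x * legendre (Suc n) x - (real n + 1) * legendre n x"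
    unfolding legendre_deriv_weighted_of_recurrence[OF Suc] by (simp add: algebra_simps)
  also have "\<dots> = (real n + 2) * legendre (Suc (Suc n)) x"
    by (rule legendre_recurrence[symmetric])
  finally show ?case by (simp add: algebra_simps)
qed

lemmas legendre_deriv_weighted = legendre_deriv_weighted_of_recurrence[OF legendre_deriv_recurrence]

lemma has_real_derivative_legendre: "(legendre n has_real_derivative legendre_deriv n x) (at x)"
proof (induction n x rule: legendre.induct)
  case (1 x)
  then show ?case by simp
next
  case (2 x)
  then show ?case by (auto intro!: derivative_eq_intros)
next
  case (3 n x)
  define c where "c = 1 / (real n + 2)"
  have eq: "legendre (Suc (Suc n))
      = (\<lambda>x. c * ((2 * real n + 3) * x * legendre (Suc n) x - (real n + 1) * legendre n x))"
    by (simp add: fun_eq_iff c_def)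
  have "c * ((2 * real n + 3) * (legendre (Suc n) x + x * legendre_deriv (Suc n) x)
        - (real n + 1) * legendre_deriv n x)
      = legendre_deriv (Suc (Suc n)) x"
  proof -
    have combine: "\<And>a b d::real. x * b = d + (real n + 1) * a \<Longrightarrow>
        c * ((2 * real n + 3) * (a + x * b) - (real n + 1) * d) = x * b + (real n + 2) * a"
      by (simp add: c_def field_simps)
    have "x * legendre_deriv (Suc n) x = legendre_deriv n x + (real n + 1) * legendre (Suc n) x"
      using legendre_deriv_recurrence[of x n] by (simp del: legendre_deriv.simps add: algebra_simps)
    from combine[OF this] show ?thesis
      by (simp add: algebra_simps)
  qed
  moreover have "((\<lambda>x. c * ((2 * real n + 3) * x * legendre (Suc n) x - (real n + 1) * legendre n x))
      has_real_derivative c * ((2 * real n + 3) * (legendre (Suc n) x + x * legendre_deriv (Suc n) x)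
        - (real n + 1) * legendre_deriv n x)) (at x)"
    by (auto intro!: derivative_eq_intros 3 simp del: legendre_deriv.simps simp: algebra_simps)
  ultimately show ?case
    unfolding eq by simp
qed

lemma continuous_on_legendre [continuous_intros]:
  "continuous_on S g \<Longrightarrow> continuous_on S (\<lambda>x. legendre n (g x))"
  using continuous_on_compose2[of UNIV "legendre n" S g] has_real_derivative_legendre
  by (meson DERIV_continuous continuous_at_imp_continuous_on subset_UNIV)

lemma continuous_on_legendre_deriv [continuous_intros]:
  "continuous_on S (legendre_deriv n)"
  by (induction n) (auto intro!: continuous_intros)

lemma legendre_differential_equation:
  "((\<lambda>x. (x\<^sup>2 - 1) * legendre_deriv n x) has_real_derivative real n * (real n + 1) * legendre n x) (at x)"
proof (cases n)
  case 0
  then show ?thesis by simp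
next
  case (Suc m)
  have eq: "(\<lambda>x. (x\<^sup>2 - 1) * legendre_deriv n x)
      = (\<lambda>x. real (Suc m) * (x * legendre (Suc m) x - legendre m x))"
    using legendre_deriv_weighted Suc by (simp add: fun_eq_iff del: legendre_deriv.simps)
  have "((\<lambda>x. real (Suc m) * (x * legendre (Suc m) x - legendre m x)) has_real_derivative
      real (Suc m) * (1 * legendre (Suc m) x + x * legendre_deriv (Suc m) x - legendre_deriv m x)) (at x)"
    by (auto intro!: derivative_eq_intros has_real_derivative_legendre simp del: legendre_deriv.simps)
  moreover have "real (Suc m) * (1 * legendre (Suc m) x + x * legendre_deriv (Suc m) x - legendre_deriv m x)
      = real n * (real n + 1) * legendre n x"
    using legendre_deriv_recurrence[of x m] Suc by (simp del: legendre_deriv.simps add: algebra_simps)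
  ultimately show ?thesis
    unfolding eq by simp
qed

text \<open>Integration by parts against the differential equation; the boundary terms vanish
  because of the factor \<open>x\<^sup>2 - 1\<close>.\<close>
lemma legendre_integral_by_parts:
  "integral {-1..1} (\<lambda>x. legendre_deriv m x * ((x\<^sup>2 - 1) * legendre_deriv n x))
   + real n * (real n + 1) * integral {-1..1} (\<lambda>x. legendre m x * legendre n x) = 0"
proof -
  define \<Phi> where "\<Phi> x = legendre m x * ((x\<^sup>2 - 1) * legendre_deriv n x)" for x
  define \<Phi>' where "\<Phi>' x = legendre_deriv m x * ((x\<^sup>2 - 1) * legendre_deriv n x)
      + real n * (real n + 1) * (legendre m x * legendre n x)" for x
  have "(\<Phi> has_real_derivative \<Phi>' x) (at x)" for x
    unfolding \<Phi>_def \<Phi>'_def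
    by (rule DERIV_mult[OF has_real_derivative_legendre legendre_differential_equation, THEN DERIV_cong])
       (simp add: algebra_simps)
  then have "(\<Phi>' has_integral \<Phi> 1 - \<Phi> (-1)) {-1..1}"
    by (intro fundamental_theorem_of_calculus)
       (auto intro: has_field_derivative_at_within simp: has_real_derivative_iff_has_vector_derivative[symmetric])
  then have "integral {-1..1} \<Phi>' = 0"
    by (simp add: \<Phi>_def integral_unique)
  moreover have "integral {-1..1} \<Phi>'
      = integral {-1..1} (\<lambda>x. legendre_deriv m x * ((x\<^sup>2 - 1) * legendre_deriv n x))
        + integral {-1..1} (\<lambda>x. real n * (real n + 1) * (legendre m x * legendre n x))"
    unfolding \<Phi>'_def
    by (rule integral_add) (auto intro!: integrable_continuous_interval continuous_intros)
  ultimately show ?thesis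
    by simp
qed

lemma legendre_orthogonal:
  assumes "m \<noteq> n"
  shows "integral {-1..1} (\<lambda>x. legendre m x * legendre n x) = 0"
proof -
  have swap_deriv: "(\<lambda>x. legendre_deriv n x * ((x\<^sup>2 - 1) * legendre_deriv m x))
      = (\<lambda>x. legendre_deriv m x * ((x\<^sup>2 - 1) * legendre_deriv n x))"
    and swap: "(\<lambda>x. legendre n x * legendre m x) = (\<lambda>x. legendre m x * legendre n x)"
    by (simp_all add: fun_eq_iff algebra_simps)
  have "(real n * (real n + 1) - real m * (real m + 1))
      * integral {-1..1} (\<lambda>x. legendre m x * legendre n x) = 0"
    using legendre_integral_by_parts[of m n] legendre_integral_by_parts[of n m]
    unfolding swap_deriv swap by (simp add: algebra_simps)
  moreover have "real n * (real n + 1) - real m * (real m + 1) = (real n - real m) * (real n + real m + 1)"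
    by (simp add: algebra_simps)
  ultimately show ?thesis
    using assms by simp
qed

lemma integral_legendre_recurrence:
  "(real n + 2) * integral {-1..1} (\<lambda>x. legendre (Suc (Suc n)) x * legendre k x)
   = (2 * real n + 3) * integral {-1..1} (\<lambda>x. x * legendre (Suc n) x * legendre k x)
     - (real n + 1) * integral {-1..1} (\<lambda>x. legendre n x * legendre k x)"
proof -
  have pointwise: "(real n + 2) * legendre (Suc (Suc n)) x * legendre k x
      = (2 * real n + 3) * (x * legendre (Suc n) x * legendre k x)
        - (real n + 1) * (legendre n x * legendre k x)" for x
    by (simp only: legendre_recurrence) (simp add: algebra_simps)
  have "(real n + 2) * integral {-1..1} (\<lambda>x. legendre (Suc (Suc n)) x * legendre k x)
      = integral {-1..1} (\<lambda>x. (real n + 2) * legendre (Suc (Suc n)) x * legendre k x)"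
    by (simp only: integral_mult_right[symmetric] mult.assoc)
  also have "\<dots> = (2 * real n + 3) * integral {-1..1} (\<lambda>x. x * legendre (Suc n) x * legendre k x)
      - (real n + 1) * integral {-1..1} (\<lambda>x. legendre n x * legendre k x)"
    unfolding pointwise
    by (subst integral_diff) (auto intro!: integrable_continuous_interval continuous_intros)
  finally show ?thesis .
qed

lemma legendre_norm:
  "integral {-1..1} (\<lambda>x. legendre n x * legendre n x) = 2 / (2 * real n + 1)"
proof -
  define N where "N n = integral {-1..1} (\<lambda>x. legendre n x * legendre n x)" for n
  define X where "X a b = integral {-1..1} (\<lambda>x. x * legendre a x * legendre b x)" for a b
  have X_sym: "X a b = X b a" for a b
    unfolding X_def by (simp add: algebra_simps)
  have X_below: "X (Suc n) n = (real n + 1) * N n / (2 * real n + 3)" for n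
  proof -
    have "(real n + 2) * 0 = (2 * real n + 3) * X (Suc n) n - (real n + 1) * N n"
      using integral_legendre_recurrence[of n n, folded X_def N_def] legendre_orthogonal[of "Suc (Suc n)" n]
      by simp
    then show ?thesis by (simp add: field_simps)
  qed
  have step: "N (Suc (Suc n)) = (2 * real n + 3) * N (Suc n) / (2 * real n + 5)" for n
  proof -
    have "(real n + 2) * N (Suc (Suc n)) = (2 * real n + 3) * X (Suc n) (Suc (Suc n))"
      using integral_legendre_recurrence[of n "Suc (Suc n)", folded X_def N_def]
        legendre_orthogonal[of n "Suc (Suc n)"]
      by simp
    also have "X (Suc n) (Suc (Suc n)) = (real n + 2) * N (Suc n) / (2 * real n + 5)"
      using X_below[of "Suc n"] X_sym[of "Suc n" "Suc (Suc n)"] by (simp add: algebra_simps)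
    finally have "(real n + 2) * N (Suc (Suc n)) = (real n + 2) * ((2 * real n + 3) * N (Suc n) / (2 * real n + 5))"
      by simp
    then show ?thesis by (rule mult_left_cancel[THEN iffD1, rotated]) simp
  qed
  have "((\<lambda>x. x * x) has_integral (1^3/3 - (-1)^3/3)) {-1..1::real}"
    by (rule fundamental_theorem_of_calculus)
       (auto intro!: derivative_eq_intros simp: has_real_derivative_iff_has_vector_derivative[symmetric]
          intro: has_vector_derivative_at_within simp: power2_eq_square)
  then have N1: "N 1 = 2 / 3"
    unfolding N_def by (simp add: integral_unique)
  have "N (Suc n) = 2 / (2 * real (Suc n) + 1)" for n
  proof (induction n)
    case 0
    then show ?case using N1 by simp
  next
    case (Suc n)
    then show ?case unfolding step by (simp add: field_simps)
  qed
  moreover have "N 0 = 2"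
    unfolding N_def by simp
  ultimately have "N n = 2 / (2 * real n + 1)"
    by (cases n) auto
  then show ?thesis
    unfolding N_def .
qed

definition legendre_span :: "nat \<Rightarrow> (real \<Rightarrow> complex) \<Rightarrow> bool" where
  "legendre_span J q \<longleftrightarrow> (\<exists>d. \<forall>x. q x = (\<Sum>j\<le>J. d j * complex_of_real (legendre j x)))"

lemma legendre_span_zero: "legendre_span J (\<lambda>x. 0)"
  unfolding legendre_span_def by (rule exI[of _ "\<lambda>_. 0"]) simp

lemma legendre_span_add:
  assumes "legendre_span J p" and "legendre_span J q"
  shows "legendre_span J (\<lambda>x. p x + q x)"
proof -
  obtain dp dq where "\<And>x. p x = (\<Sum>j\<le>J. dp j * complex_of_real (legendre j x))"
    and "\<And>x. q x = (\<Sum>j\<le>J. dq j * complex_of_real (legendre j x))"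
    using assms unfolding legendre_span_def by blast
  then show ?thesis
    unfolding legendre_span_def
    by (intro exI[of _ "\<lambda>j. dp j + dq j"]) (simp add: distrib_right sum.distrib)
qed

lemma legendre_span_scale:
  assumes "legendre_span J p"
  shows "legendre_span J (\<lambda>x. c * p x)"
proof -
  obtain dp where "\<And>x. p x = (\<Sum>j\<le>J. dp j * complex_of_real (legendre j x))"
    using assms unfolding legendre_span_def by blast
  then show ?thesis
    unfolding legendre_span_def
    by (intro exI[of _ "\<lambda>j. c * dp j"]) (simp add: sum_distrib_left mult.assoc)
qed

lemma legendre_span_mono:
  assumes "J \<le> K" and "legendre_span J p"
  shows "legendre_span K p"
proof -
  obtain dp where p: "\<And>x. p x = (\<Sum>j\<le>J. dp j * complex_of_real (legendre j x))"
    using assms(2) unfolding legendre_span_def by blast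
  have "p x = (\<Sum>j\<le>K. (if j \<le> J then dp j else 0) * complex_of_real (legendre j x))" for x
    unfolding p using assms(1) by (intro sum.mono_neutral_cong_left) auto
  then show ?thesis
    unfolding legendre_span_def by (intro exI[of _ "\<lambda>j. if j \<le> J then dp j else 0"]) simp
qed

lemma legendre_span_legendre:
  assumes "i \<le> K"
  shows "legendre_span K (\<lambda>x. c * complex_of_real (legendre i x))"
proof -
  have "c * complex_of_real (legendre i x)
      = (\<Sum>j\<le>K. (if j = i then c else 0) * complex_of_real (legendre j x))" for x
  proof -
    have "(\<Sum>j\<le>K. (if j = i then c else 0) * complex_of_real (legendre j x))
        = (\<Sum>j\<le>K. if j = i then c * complex_of_real (legendre i x) else 0)"
      by (rule sum.cong) auto
    then show ?thesis
      using assms by simp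
  qed
  then show ?thesis
    unfolding legendre_span_def by (intro exI[of _ "\<lambda>j. if j = i then c else 0"]) simp
qed

lemma legendre_span_sum:
  assumes "finite A" and "\<And>i. i \<in> A \<Longrightarrow> legendre_span K (f i)"
  shows "legendre_span K (\<lambda>x. \<Sum>i\<in>A. f i x)"
  using assms by (induction A rule: finite_induct) (simp_all add: legendre_span_zero legendre_span_add)

lemma legendre_span_times_x_legendre:
  "legendre_span (Suc i) (\<lambda>x. complex_of_real x * complex_of_real (legendre i x))"
proof (cases i)
  case 0
  then show ?thesis
    using legendre_span_legendre[of 1 "Suc 0" 1] by simp
next
  case (Suc m)
  have "x * legendre (Suc m) x = (real m + 2) / (2 * real m + 3) * legendre (Suc (Suc m)) x
      + (real m + 1) / (2 * real m + 3) * legendre m x" for x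
  proof -
    have divide_out: "\<And>A B P R y c::real. c \<noteq> 0 \<Longrightarrow> c * y = P * A + R * B \<Longrightarrow> y = P / c * A + R / c * B"
      by (simp add: field_simps)
    have "(2 * real m + 3) * (x * legendre (Suc m) x)
        = (real m + 2) * legendre (Suc (Suc m)) x + (real m + 1) * legendre m x"
      using legendre_recurrence[of m x] by (simp del: legendre.simps add: algebra_simps)
    then show ?thesis
      by (rule divide_out[rotated]) simp
  qed
  then have "complex_of_real x * complex_of_real (legendre (Suc m) x)
      = complex_of_real ((real m + 2) / (2 * real m + 3)) * complex_of_real (legendre (Suc (Suc m)) x)
        + complex_of_real ((real m + 1) / (2 * real m + 3)) * complex_of_real (legendre m x)" for x
    by (metis of_real_add of_real_mult)
  then show ?thesis
    unfolding Suc by (simp only:) (intro legendre_span_add legendre_span_legendre; simp)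
qed

lemma legendre_span_times_x:
  assumes "legendre_span J q"
  shows "legendre_span (Suc J) (\<lambda>x. complex_of_real x * q x)"
proof -
  obtain d where q: "\<And>x. q x = (\<Sum>j\<le>J. d j * complex_of_real (legendre j x))"
    using assms unfolding legendre_span_def by blast
  have "legendre_span (Suc J) (\<lambda>x. \<Sum>j\<le>J. d j * (complex_of_real x * complex_of_real (legendre j x)))"
    by (intro legendre_span_sum legendre_span_scale legendre_span_mono[OF _ legendre_span_times_x_legendre])
      auto
  then show ?thesis
    by (simp add: q sum_distrib_left mult_ac)
qed

lemma legendre_span_affine_power: "legendre_span k (\<lambda>x. complex_of_real ((\<alpha> * x + \<beta>) ^ k))"
proof (induction k)
  case 0
  then show ?case
    using legendre_span_legendre[of 0 0 1] by simp
next
  case (Suc k)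
  have eq: "(\<lambda>x. complex_of_real ((\<alpha> * x + \<beta>) ^ Suc k))
      = (\<lambda>x. complex_of_real \<alpha> * (complex_of_real x * complex_of_real ((\<alpha> * x + \<beta>) ^ k))
          + complex_of_real \<beta> * complex_of_real ((\<alpha> * x + \<beta>) ^ k))"
    by (simp add: fun_eq_iff algebra_simps)
  show ?case
    unfolding eq
    by (intro legendre_span_add legendre_span_scale legendre_span_times_x Suc legendre_span_mono[OF _ Suc])
      auto
qed

lemma legendre_span_polynomial:
  "legendre_span J (\<lambda>x. \<Sum>i\<le>J. ((\<alpha> * x + \<beta>) ^ i / fact i) *\<^sub>R w i)"
proof (rule legendre_span_sum)
  fix i
  assume "i \<in> {..J}"
  have eq: "(\<lambda>x. ((\<alpha> * x + \<beta>) ^ i / fact i) *\<^sub>R w i)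
      = (\<lambda>x. w i / of_real (fact i) * complex_of_real ((\<alpha> * x + \<beta>) ^ i))"
    by (simp add: fun_eq_iff scaleR_conv_of_real)
  show "legendre_span J (\<lambda>x. ((\<alpha> * x + \<beta>) ^ i / fact i) *\<^sub>R w i)"
    unfolding eq using \<open>i \<in> {..J}\<close>
    by (intro legendre_span_scale legendre_span_mono[OF _ legendre_span_affine_power]) auto
qed simp

section \<open>Orthonormal families on an interval\<close>

lemma weighted_amgm:
  fixes x y t :: real
  assumes "0 < t"
  shows "x * y \<le> (t * x\<^sup>2 + y\<^sup>2 / t) / 2"
proof -
  have "0 \<le> (t * x - y)\<^sup>2 / t"
    using assms by simp
  also have "(t * x - y)\<^sup>2 / t = t * x\<^sup>2 + y\<^sup>2 / t - 2 * (x * y)"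
    using assms by (simp add: power2_eq_square field_simps)
  finally show ?thesis by simp
qed

lemma le_sqrt_of_weighted_bound:
  fixes X A B :: real
  assumes bound: "\<And>t. 0 < t \<Longrightarrow> X \<le> (t * A + B / t) / 2"
    and "0 \<le> A" and "0 \<le> B"
  shows "X \<le> sqrt (A * B)"
proof (cases "0 < A \<and> 0 < B")
  case True
  define t where "t = sqrt (B / A)"
  have "0 < t"
    using True by (simp add: t_def)
  moreover have "t * A = sqrt (A * B)" and "B / t = sqrt (A * B)"
    using True by (simp_all add: t_def real_sqrt_divide real_sqrt_mult field_simps)
  ultimately show ?thesis
    using bound[of t] by simp
next
  case False
  then have "A = 0 \<or> B = 0"
    using assms by auto
  have "X \<le> e" if "0 < e" for e
  proof -
    define t where "t = (if A = 0 then (B + 1) / e else e / (A + 1))"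
    have "0 < t"
      using \<open>0 < e\<close> assms by (simp add: t_def add_nonneg_pos)
    have "t * A \<le> e \<and> B / t \<le> e"
    proof (cases "A = 0")
      case True
      have "B / t = e * (B / (B + 1))"
        using \<open>0 < e\<close> assms True by (simp add: t_def field_simps)
      also have "\<dots> \<le> e"
        using \<open>0 < e\<close> assms by (intro mult_left_le) simp_all
      finally show ?thesis
        using True \<open>0 < e\<close> by simp
    next
      case False
      with \<open>A = 0 \<or> B = 0\<close> have "B = 0" by simp
      have "t * A = e * (A / (A + 1))"
        using \<open>0 < e\<close> assms False by (simp add: t_def field_simps)
      also have "\<dots> \<le> e"
        using \<open>0 < e\<close> assms by (intro mult_left_le) simp_all
      finally show ?thesis
        using \<open>B = 0\<close> \<open>0 < e\<close> by simp
    qed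
    then show ?thesis
      using bound[OF \<open>0 < t\<close>] by (simp add: field_simps)
  qed
  then have "X \<le> 0"
    by (metis field_le_epsilon add_0)
  then show ?thesis
    using \<open>A = 0 \<or> B = 0\<close> by auto
qed

lemma norm_integral_mult_cnj_le:
  fixes u g :: "real \<Rightarrow> complex"
  assumes "continuous_on {a..b} u" and "continuous_on {a..b} g" and "0 < t"
  shows "norm (integral {a..b} (\<lambda>x. u x * cnj (g x)))
    \<le> (t * integral {a..b} (\<lambda>x. (norm (u x))\<^sup>2) + integral {a..b} (\<lambda>x. (norm (g x))\<^sup>2) / t) / 2"
proof -
  have "norm (integral {a..b} (\<lambda>x. u x * cnj (g x)))
      \<le> integral {a..b} (\<lambda>x. (t * (norm (u x))\<^sup>2 + (norm (g x))\<^sup>2 / t) / 2)"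
    using assms weighted_amgm[OF \<open>0 < t\<close>]
    by (intro integral_norm_bound_integral integrable_continuous_interval continuous_intros)
      (simp_all add: norm_mult)
  also have "\<dots> = (t * integral {a..b} (\<lambda>x. (norm (u x))\<^sup>2) + integral {a..b} (\<lambda>x. (norm (g x))\<^sup>2) / t) / 2"
    using assms by (simp add: integral_add integrable_continuous_interval continuous_intros)
  finally show ?thesis .
qed

locale orthonormal_family =
  fixes a b :: real and J :: nat and Q :: "nat \<Rightarrow> real \<Rightarrow> real"
  assumes continuous_Q: "\<And>j. j \<le> J \<Longrightarrow> continuous_on {a..b} (Q j)"
    and orthonormal: "\<And>j k. j \<le> J \<Longrightarrow> k \<le> J \<Longrightarrow>
      integral {a..b} (\<lambda>x. Q j x * Q k x) = (if j = k then 1 else 0)"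
begin

definition coeff :: "(real \<Rightarrow> complex) \<Rightarrow> nat \<Rightarrow> complex" where
  "coeff f j = integral {a..b} (\<lambda>x. f x * complex_of_real (Q j x))"

definition proj :: "(real \<Rightarrow> complex) \<Rightarrow> real \<Rightarrow> complex" where
  "proj f x = (\<Sum>j\<le>J. coeff f j * complex_of_real (Q j x))"

lemma continuous_on_expansion:
  "continuous_on {a..b} (\<lambda>x. \<Sum>j\<le>J. e j * complex_of_real (Q j x))"
  by (intro continuous_intros continuous_Q) simp

lemma proj_eq: "proj f = (\<lambda>x. \<Sum>j\<le>J. coeff f j * complex_of_real (Q j x))"
  by (simp add: fun_eq_iff proj_def)

lemma continuous_on_proj: "continuous_on {a..b} (proj f)"
  unfolding proj_eq by (rule continuous_on_expansion)

lemma integral_expansion_mult_cnj: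
  assumes "continuous_on {a..b} g"
  shows "integral {a..b} (\<lambda>x. (\<Sum>j\<le>J. e j * complex_of_real (Q j x)) * cnj (g x))
    = (\<Sum>j\<le>J. e j * cnj (coeff g j))"
proof -
  have "integral {a..b} (\<lambda>x. (\<Sum>j\<le>J. e j * complex_of_real (Q j x)) * cnj (g x))
      = integral {a..b} (\<lambda>x. \<Sum>j\<le>J. e j * cnj (g x * complex_of_real (Q j x)))"
    by (simp add: sum_distrib_left sum_distrib_right mult_ac)
  also have "\<dots> = (\<Sum>j\<le>J. integral {a..b} (\<lambda>x. e j * cnj (g x * complex_of_real (Q j x))))"
    using assms by (intro integral_sum integrable_continuous_interval continuous_intros continuous_Q) auto
  also have "\<dots> = (\<Sum>j\<le>J. e j * cnj (coeff g j))"
    by (simp add: coeff_def integral_cnj)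
  finally show ?thesis .
qed

lemma coeff_expansion:
  assumes k: "k \<le> J"
  shows "coeff (\<lambda>x. \<Sum>j\<le>J. e j * complex_of_real (Q j x)) k = e k"
proof -
  have "coeff (\<lambda>x. \<Sum>j\<le>J. e j * complex_of_real (Q j x)) k
      = integral {a..b} (\<lambda>x. \<Sum>j\<le>J. e j * complex_of_real (Q j x * Q k x))"
    unfolding coeff_def by (simp only: sum_distrib_right mult.assoc of_real_mult)
  also have "\<dots> = (\<Sum>j\<le>J. integral {a..b} (\<lambda>x. e j * complex_of_real (Q j x * Q k x)))"
    by (rule integral_sum) (auto intro!: integrable_continuous_interval continuous_intros continuous_Q k)
  also have "\<dots> = (\<Sum>j\<le>J. e j * complex_of_real (integral {a..b} (\<lambda>x. Q j x * Q k x)))"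
  proof (rule sum.cong[OF refl])
    fix j
    assume "j \<in> {..J}"
    then have "((\<lambda>x. Q j x * Q k x) has_integral integral {a..b} (\<lambda>x. Q j x * Q k x)) {a..b}"
      using k by (auto intro!: integrable_integral integrable_continuous_interval continuous_intros continuous_Q)
    from integral_unique[OF has_integral_of_real[OF this, where 'b = complex]]
    show "integral {a..b} (\<lambda>x. e j * complex_of_real (Q j x * Q k x))
        = e j * complex_of_real (integral {a..b} (\<lambda>x. Q j x * Q k x))"
      by simp
  qed
  also have "\<dots> = (\<Sum>j\<le>J. if j = k then e j else 0)"
    by (rule sum.cong[OF refl]) (auto simp: orthonormal k)
  also have "\<dots> = e k"
    using k by simp
  finally show ?thesis .
qed

lemma coeff_diff:
  assumes "continuous_on {a..b} f" and "continuous_on {a..b} g" and "j \<le> J"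
  shows "coeff (\<lambda>x. f x - g x) j = coeff f j - coeff g j"
  unfolding coeff_def left_diff_distrib
  using assms by (intro integral_diff integrable_continuous_interval continuous_intros continuous_Q)

lemma proj_expansion:
  "proj (\<lambda>x. \<Sum>j\<le>J. e j * complex_of_real (Q j x)) = (\<lambda>x. \<Sum>j\<le>J. e j * complex_of_real (Q j x))"
  unfolding proj_eq by (intro ext sum.cong) (simp_all add: coeff_expansion)

lemma coeff_residual:
  assumes "continuous_on {a..b} f" and "k \<le> J"
  shows "coeff (\<lambda>x. f x - proj f x) k = 0"
proof -
  have "coeff (\<lambda>x. f x - proj f x) k = coeff f k - coeff (proj f) k"
    by (rule coeff_diff[OF assms(1) continuous_on_proj assms(2)])
  also have "coeff (proj f) k = coeff f k"
    unfolding proj_eq using assms(2) by (rule coeff_expansion)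
  finally show ?thesis
    by simp
qed

lemma residual_orthogonal_proj:
  assumes "continuous_on {a..b} f"
  shows "integral {a..b} (\<lambda>x. (f x - proj f x) * cnj (proj f x)) = 0"
proof -
  have "continuous_on {a..b} (\<lambda>x. f x - proj f x)"
    using assms continuous_on_proj by (rule continuous_on_diff)
  then have "integral {a..b} (\<lambda>x. proj f x * cnj (f x - proj f x))
      = (\<Sum>j\<le>J. coeff f j * cnj (coeff (\<lambda>x. f x - proj f x) j))"
    using integral_expansion_mult_cnj[of "\<lambda>x. f x - proj f x" "coeff f"] by (simp only: proj_def)
  also have "\<dots> = 0"
    by (simp add: coeff_residual[OF assms])
  finally have "integral {a..b} (\<lambda>x. proj f x * cnj (f x - proj f x)) = 0" .
  then have "cnj (integral {a..b} (\<lambda>x. proj f x * cnj (f x - proj f x))) = 0"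
    by simp
  then show ?thesis
    by (simp add: integral_cnj mult.commute)
qed

lemma integral_norm_residual_le:
  assumes "continuous_on {a..b} f"
  shows "integral {a..b} (\<lambda>x. (norm (f x - proj f x))\<^sup>2) \<le> integral {a..b} (\<lambda>x. (norm (f x))\<^sup>2)"
proof -
  define u where "u x = f x - proj f x" for x
  have cont: "continuous_on {a..b} u" "continuous_on {a..b} (proj f)"
    using assms by (auto simp: u_def[abs_def] intro!: continuous_intros continuous_on_proj)
  have pythagoras: "(norm (f x))\<^sup>2 = (norm (u x))\<^sup>2 + (norm (proj f x))\<^sup>2 + 2 * Re (u x * cnj (proj f x))" for x
    unfolding u_def cmod_power2 by (simp add: power2_eq_square algebra_simps)
  have "integral {a..b} (\<lambda>x. (norm (f x))\<^sup>2)
      = integral {a..b} (\<lambda>x. (norm (u x))\<^sup>2 + (norm (proj f x))\<^sup>2 + 2 * Re (u x * cnj (proj f x)))"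
    by (simp only: pythagoras)
  also have "\<dots> = integral {a..b} (\<lambda>x. (norm (u x))\<^sup>2 + (norm (proj f x))\<^sup>2)
      + integral {a..b} (\<lambda>x. 2 * Re (u x * cnj (proj f x)))"
    using cont by (intro integral_add integrable_continuous_interval continuous_intros)
  also have "integral {a..b} (\<lambda>x. (norm (u x))\<^sup>2 + (norm (proj f x))\<^sup>2)
      = integral {a..b} (\<lambda>x. (norm (u x))\<^sup>2) + integral {a..b} (\<lambda>x. (norm (proj f x))\<^sup>2)"
    using cont by (intro integral_add integrable_continuous_interval continuous_intros)
  also have "integral {a..b} (\<lambda>x. 2 * Re (u x * cnj (proj f x)))
      = 2 * Re (integral {a..b} (\<lambda>x. u x * cnj (proj f x)))"
  proof -
    have "(\<lambda>x. u x * cnj (proj f x)) integrable_on {a..b}"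
      using cont by (intro integrable_continuous_interval continuous_intros)
    from integral_linear[OF this bounded_linear_Re] show ?thesis
      by (simp only: o_def integral_mult_right)
  qed
  also have "integral {a..b} (\<lambda>x. u x * cnj (proj f x)) = 0"
    unfolding u_def by (rule residual_orthogonal_proj[OF assms])
  finally have "integral {a..b} (\<lambda>x. (norm (u x))\<^sup>2)
      = integral {a..b} (\<lambda>x. (norm (f x))\<^sup>2) - integral {a..b} (\<lambda>x. (norm (proj f x))\<^sup>2)"
    by simp
  moreover have "0 \<le> integral {a..b} (\<lambda>x. (norm (proj f x))\<^sup>2)"
    using cont by (intro integral_nonneg integrable_continuous_interval continuous_intros) auto
  ultimately show ?thesis
    unfolding u_def by linarith
qed

lemma proj_diff:
  assumes "continuous_on {a..b} f" and "continuous_on {a..b} g"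
  shows "proj (\<lambda>x. f x - g x) x = proj f x - proj g x"
  using assms unfolding proj_def by (simp add: coeff_diff sum_subtractf left_diff_distrib)

theorem coeff_inner_error_le:
  assumes f: "continuous_on {a..b} f" and g: "continuous_on {a..b} g" and "0 < t"
  shows "norm ((\<Sum>j\<le>J. coeff f j * cnj (coeff g j)) - integral {a..b} (\<lambda>x. f x * cnj (g x)))
    \<le> (t * integral {a..b} (\<lambda>x. (norm (f x - (\<Sum>j\<le>J. d j * complex_of_real (Q j x))))\<^sup>2)
      + integral {a..b} (\<lambda>x. (norm (g x))\<^sup>2) / t) / 2"
proof -
  define q where "q = (\<lambda>x. \<Sum>j\<le>J. d j * complex_of_real (Q j x))"
  define h where "h x = f x - q x" for x
  have q: "continuous_on {a..b} q"
    unfolding q_def by (rule continuous_on_expansion)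
  then have h: "continuous_on {a..b} h"
    unfolding h_def[abs_def] using f by (rule continuous_on_diff[rotated])
  have residual: "f x - proj f x = h x - proj h x" for x
    unfolding h_def proj_diff[OF f q] unfolding q_def proj_expansion by simp
  have "(\<Sum>j\<le>J. coeff f j * cnj (coeff g j)) - integral {a..b} (\<lambda>x. f x * cnj (g x))
      = integral {a..b} (\<lambda>x. proj f x * cnj (g x)) - integral {a..b} (\<lambda>x. f x * cnj (g x))"
    unfolding proj_eq using g by (simp add: integral_expansion_mult_cnj)
  also have "\<dots> = - integral {a..b} (\<lambda>x. (h x - proj h x) * cnj (g x))"
    using f g continuous_on_proj unfolding residual[symmetric]
    by (simp add: integral_diff left_diff_distrib integrable_continuous_interval continuous_intros)
  finally have "norm ((\<Sum>j\<le>J. coeff f j * cnj (coeff g j)) - integral {a..b} (\<lambda>x. f x * cnj (g x)))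
      \<le> (t * integral {a..b} (\<lambda>x. (norm (h x - proj h x))\<^sup>2) + integral {a..b} (\<lambda>x. (norm (g x))\<^sup>2) / t) / 2"
    using h g continuous_on_proj \<open>0 < t\<close>
    by (simp only: norm_minus_cancel) (intro norm_integral_mult_cnj_le continuous_on_diff)
  also have "\<dots> \<le> (t * integral {a..b} (\<lambda>x. (norm (h x))\<^sup>2) + integral {a..b} (\<lambda>x. (norm (g x))\<^sup>2) / t) / 2"
    using integral_norm_residual_le[OF h] \<open>0 < t\<close> by simp
  finally show ?thesis
    unfolding h_def q_def .
qed

end

section \<open>Integrals over the real line\<close>

lemma integral_le_integral_UNIV:
  fixes F G :: "real \<Rightarrow> real"
  assumes "\<And>x. x \<in> S \<Longrightarrow> F x \<le> G x" and "\<And>x. 0 \<le> G x" and "G integrable_on UNIV"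
  shows "integral S F \<le> integral UNIV G"
proof (cases "F integrable_on S")
  case True
  have "integral S F = integral UNIV (\<lambda>x. if x \<in> S then F x else 0)"
    by (simp add: integral_restrict_UNIV)
  also have "\<dots> \<le> integral UNIV G"
    using True assms by (intro integral_le) (auto simp: integrable_restrict_UNIV)
  finally show ?thesis .
next
  case False
  then show ?thesis
    using assms by (simp add: not_integrable_integral integral_nonneg)
qed

lemma has_integral_indicator_interval:
  fixes u w K :: real
  assumes "u \<le> w"
  shows "((\<lambda>x. if x \<in> {u..w} then K else 0) has_integral K * (w - u)) UNIV"
proof -
  have "((\<lambda>x. K) has_integral K * (w - u)) {u..w}"
    using has_integral_const_real[of K u w] assms by (simp add: mult.commute)
  then show ?thesis
    by (rule has_integral_restrict_UNIV[THEN iffD2])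
qed

lemma integral_le_indicator_bound:
  fixes F :: "real \<Rightarrow> real"
  assumes "\<And>x. x \<in> S \<Longrightarrow> F x \<le> (if x \<in> {u..w} then K else 0)" and "0 \<le> K" and "u \<le> w"
  shows "integral S F \<le> K * (w - u)"
proof -
  have "integral S F \<le> integral UNIV (\<lambda>x. if x \<in> {u..w} then K else 0)"
    using assms has_integral_indicator_interval[OF \<open>u \<le> w\<close>, of K]
    by (intro integral_le_integral_UNIV) auto
  also have "\<dots> = K * (w - u)"
    using has_integral_indicator_interval[OF \<open>u \<le> w\<close>] by (rule integral_unique)
  finally show ?thesis .
qed

lemma integral_consecutive_intervals:
  fixes F :: "real \<Rightarrow> 'a::banach"
  assumes "0 < \<eta>" and "lo \<le> hi" and F: "continuous_on UNIV F"
  shows "integral {of_int lo * \<eta> .. (of_int hi + 1) * \<eta>} F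
    = (\<Sum>n\<in>{lo..hi}. integral {of_int n * \<eta> .. (of_int n + 1) * \<eta>} F)"
  using \<open>lo \<le> hi\<close>
proof (induction hi rule: int_ge_induct)
  case base
  then show ?case by simp
next
  case (step i)
  have "of_int lo * \<eta> \<le> (of_int i + 1) * \<eta>"
    using step \<open>0 < \<eta>\<close> by (simp add: mult_right_mono)
  moreover have "(of_int i + 1) * \<eta> \<le> (of_int (i + 1) + 1) * \<eta>"
    using \<open>0 < \<eta>\<close> by simp
  moreover have "F integrable_on {of_int lo * \<eta> .. (of_int (i + 1) + 1) * \<eta>}"
    by (rule integrable_continuous_interval) (rule continuous_on_subset[OF F], simp)
  ultimately have "integral {of_int lo * \<eta> .. (of_int (i + 1) + 1) * \<eta>} F
      = integral {of_int lo * \<eta> .. (of_int i + 1) * \<eta>} F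
        + integral {(of_int i + 1) * \<eta> .. (of_int (i + 1) + 1) * \<eta>} F"
    by (rule Henstock_Kurzweil_Integration.integral_combine[symmetric])
  also have "{lo..i + 1} = insert (i + 1) {lo..i}"
    using step by auto
  ultimately show ?case
    using step by simp
qed

lemma integral_affine_to_standard_interval:
  fixes F :: "real \<Rightarrow> real"
  assumes "0 < \<eta>" and "continuous_on {-1..1} F"
  shows "integral {of_int n * \<eta> .. (of_int n + 1) * \<eta>} (\<lambda>\<tau>. F (2 * ((\<tau> - of_int n * \<eta>) / \<eta>) - 1))
    = \<eta> / 2 * integral {-1..1} F"
proof -
  have "(F has_integral integral {-1..1} F) (cbox (-1) 1)"
    using integrable_continuous_interval[OF assms(2)] by (simp add: integrable_integral)
  moreover have "0 < 2 / \<eta>"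
    using assms(1) by simp
  ultimately have "((\<lambda>x. F ((2 / \<eta>) *\<^sub>R x + (- 2 * of_int n - 1))) has_integral integral {-1..1} F /\<^sub>R (2 / \<eta>) ^ DIM(real))
     (cbox ((-1 - (- 2 * of_int n - 1)) /\<^sub>R (2 / \<eta>)) ((1 - (- 2 * of_int n - 1)) /\<^sub>R (2 / \<eta>)))"
    by (rule has_integral_affinity')
  moreover have "cbox ((-1 - (- 2 * of_int n - 1)) /\<^sub>R (2 / \<eta>)) ((1 - (- 2 * of_int n - 1)) /\<^sub>R (2 / \<eta>))
      = {of_int n * \<eta> .. (of_int n + 1) * \<eta>}"
    using assms(1) by (simp add: field_simps)
  moreover have "(\<lambda>x. F ((2 / \<eta>) *\<^sub>R x + (- 2 * of_int n - 1))) = (\<lambda>\<tau>. F (2 * ((\<tau> - of_int n * \<eta>) / \<eta>) - 1))"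
    using assms(1) by (simp add: fun_eq_iff field_simps)
  moreover have "integral {-1..1} F /\<^sub>R (2 / \<eta>) ^ DIM(real) = \<eta> / 2 * integral {-1..1} F"
    by simp
  ultimately show ?thesis
    by (metis integral_unique)
qed

section \<open>Taylor remainder and compactly supported smooth functions\<close>

lemma bound_nonneg_of_norm_le:
  fixes f :: "'a \<Rightarrow> 'b::real_normed_vector"
  assumes "\<And>x. norm (f x) \<le> B"
  shows "0 \<le> B"
  using norm_ge_zero assms by (rule order_trans)

lemma has_integral_taylor_weight:
  fixes a b B :: real
  assumes "a \<le> b"
  shows "((\<lambda>x. B * ((b - x) ^ p / fact p)) has_integral B * (b - a) ^ Suc p / fact (Suc p)) {a..b}"
proof -
  have "((\<lambda>x. B * ((b - x) ^ p / fact p)) has_integral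
      (- B * (b - b) ^ Suc p / fact (Suc p)) - (- B * (b - a) ^ Suc p / fact (Suc p))) {a..b}"
  proof (rule fundamental_theorem_of_calculus[OF assms])
    fix x
    have "((\<lambda>x. - B * (b - x) ^ Suc p / fact (Suc p)) has_real_derivative
        (- B * (real (Suc p) * (b - x) ^ p * (0 - 1)) / fact (Suc p))) (at x)"
      by (auto intro!: derivative_eq_intros simp del: fact_Suc power_Suc)
    moreover have "- B * (real (Suc p) * (b - x) ^ p * (0 - 1)) / fact (Suc p) = B * ((b - x) ^ p / fact p)"
    proof -
      have "fact p + fact p * real p \<noteq> (0::real)"
        by (metis add_pos_nonneg fact_gt_zero mult_nonneg_nonneg of_nat_0_le_iff order_less_irrefl
            order_less_le fact_ge_zero)
      then show ?thesis
        by (simp add: fact_Suc field_simps)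
    qed
    ultimately show "((\<lambda>x. - B * (b - x) ^ Suc p / fact (Suc p)) has_vector_derivative B * ((b - x) ^ p / fact p))
        (at x within {a..b})"
      by (auto simp: has_real_derivative_iff_has_vector_derivative[symmetric] intro: has_field_derivative_at_within)
  qed
  then show ?thesis
    by simp
qed

lemma taylor_remainder_bound_ordered:
  fixes Df :: "nat \<Rightarrow> real \<Rightarrow> 'a::banach"
  assumes Df: "\<And>m t. m \<le> p \<Longrightarrow> (Df m has_vector_derivative Df (Suc m) t) (at t)"
    and B: "\<And>t. norm (Df (Suc p) t) \<le> B"
    and "a \<le> b"
  shows "norm (Df 0 b - (\<Sum>i\<le>p. ((b - a) ^ i / fact i) *\<^sub>R Df i a)) \<le> B * (b - a) ^ Suc p / fact (Suc p)"
proof -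
  define R where "R x = ((b - x) ^ (Suc p - 1) / fact (Suc p - 1)) *\<^sub>R Df (Suc p) x" for x
  have remainder: "(R has_integral Df 0 b - (\<Sum>i<Suc p. ((b - a) ^ i / fact i) *\<^sub>R Df i a)) {a..b}"
    unfolding R_def using Df \<open>a \<le> b\<close>
    by (intro Taylor_has_integral) (auto intro: has_vector_derivative_at_within)
  have "norm (Df 0 b - (\<Sum>i\<le>p. ((b - a) ^ i / fact i) *\<^sub>R Df i a)) = norm (integral {a..b} R)"
    using remainder by (simp add: integral_unique lessThan_Suc_atMost)
  also have "\<dots> \<le> integral {a..b} (\<lambda>x. B * ((b - x) ^ p / fact p))"
  proof (rule integral_norm_bound_integral)
    show "R integrable_on {a..b}"
      using remainder by blast
    show "(\<lambda>x. B * ((b - x) ^ p / fact p)) integrable_on {a..b}"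
      using has_integral_taylor_weight[OF \<open>a \<le> b\<close>] by blast
    fix x
    assume "x \<in> {a..b}"
    then have "norm (R x) = norm (Df (Suc p) x) * ((b - x) ^ p / fact p)"
      unfolding R_def by (simp add: abs_mult)
    also have "\<dots> \<le> B * ((b - x) ^ p / fact p)"
      using \<open>x \<in> {a..b}\<close> B by (intro mult_right_mono) auto
    finally show "norm (R x) \<le> B * ((b - x) ^ p / fact p)" .
  qed
  also have "\<dots> = B * (b - a) ^ Suc p / fact (Suc p)"
    using has_integral_taylor_weight[OF \<open>a \<le> b\<close>] by (rule integral_unique)
  finally show ?thesis .
qed

text \<open>For \<open>b < a\<close> apply the ordered case to \<open>x \<mapsto> Df m (-x)\<close>, whose derivatives are
  \<open>(-1)\<^sup>m Df m (-x)\<close>.\<close>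
lemma taylor_remainder_bound:
  fixes Df :: "nat \<Rightarrow> real \<Rightarrow> 'a::banach"
  assumes Df: "\<And>m t. m \<le> p \<Longrightarrow> (Df m has_vector_derivative Df (Suc m) t) (at t)"
    and B: "\<And>t. norm (Df (Suc p) t) \<le> B"
  shows "norm (Df 0 b - (\<Sum>i\<le>p. ((b - a) ^ i / fact i) *\<^sub>R Df i a)) \<le> B * \<bar>b - a\<bar> ^ Suc p / fact (Suc p)"
proof (cases "a \<le> b")
  case True
  then show ?thesis
    using taylor_remainder_bound_ordered[OF Df B True] by simp
next
  case False
  define Dr where "Dr m x = ((-1) ^ m :: real) *\<^sub>R Df m (-x)" for m x
  have "(Dr m has_vector_derivative Dr (Suc m) t) (at t)" if "m \<le> p" for m t
  proof -
    have "(uminus has_vector_derivative -1) (at t)"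
      using has_vector_derivative_minus[OF has_vector_derivative_id[of "at t"]] by (simp add: fun_eq_iff)
    then have "((\<lambda>x. Df m (-x)) has_vector_derivative (-1) *\<^sub>R Df (Suc m) (-t)) (at t)"
      using vector_diff_chain_at[of uminus "-1" t "Df m" "Df (Suc m) (-t)"] Df[OF that, of "-t"]
      by (simp add: o_def)
    from has_vector_derivative_scaleR[OF DERIV_const[of "(-1) ^ m :: real" "at t"] this]
    show ?thesis
      unfolding Dr_def by simp
  qed
  moreover have "norm (Dr (Suc p) t) \<le> B" for t
    unfolding Dr_def using B[of "-t"] by (simp add: norm_power)
  moreover have "-a \<le> -b"
    using False by simp
  ultimately have "norm (Dr 0 (-b) - (\<Sum>i\<le>p. ((-b - -a) ^ i / fact i) *\<^sub>R Dr i (-a)))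
      \<le> B * (-b - -a) ^ Suc p / fact (Suc p)"
    by (rule taylor_remainder_bound_ordered)
  moreover have "(\<Sum>i\<le>p. ((-b - -a) ^ i / fact i) *\<^sub>R Dr i (-a)) = (\<Sum>i\<le>p. ((b - a) ^ i / fact i) *\<^sub>R Df i a)"
  proof (rule sum.cong[OF refl])
    fix i
    have "(-b - -a) ^ i * (-1) ^ i = (b - a) ^ i"
      by (simp add: power_mult_distrib[symmetric])
    then show "((-b - -a) ^ i / fact i) *\<^sub>R Dr i (-a) = ((b - a) ^ i / fact i) *\<^sub>R Df i a"
      unfolding Dr_def by (simp add: scaleR_scaleR)
  qed
  moreover have "\<bar>b - a\<bar> = -b - -a"
    using False by simp
  ultimately show ?thesis
    unfolding Dr_def by simp
qed

lemma nderiv_0 [simp]: "nderiv 0 f = f"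
  unfolding nderiv_def by simp

lemma nderiv_Suc: "nderiv (Suc k) f t = vector_derivative (nderiv k f) (at t)"
  unfolding nderiv_def by simp

lemma smooth_fun_has_vector_derivative:
  assumes "smooth_fun v"
  shows "(nderiv k v has_vector_derivative nderiv (Suc k) v t) (at t)"
  using assms unfolding smooth_fun_def nderiv_Suc by (simp add: vector_derivative_works[symmetric])

lemma smooth_fun_continuous_on:
  assumes "smooth_fun v"
  shows "continuous_on S (nderiv k v)"
  using assms unfolding smooth_fun_def
  by (simp add: differentiable_imp_continuous_within continuous_at_imp_continuous_on)

locale compactly_supported_smooth =
  fixes v :: "real \<Rightarrow> complex" and r :: real
  assumes smooth: "smooth_fun v"
    and r_nonneg: "0 \<le> r"
    and supp: "\<And>t. r < \<bar>t\<bar> \<Longrightarrow> v t = 0"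
begin

lemma continuous_on_v [continuous_intros]:
  "continuous_on S g \<Longrightarrow> continuous_on S (\<lambda>x. v (g x))"
  using continuous_on_compose2[OF smooth_fun_continuous_on[OF smooth, of UNIV 0]] by simp

lemma nderiv_eq_0_outside:
  assumes t: "r \<le> \<bar>t\<bar>"
  shows "nderiv k v t = 0"
proof -
  define U where "U = {y::real. r < \<bar>y\<bar>}"
  have "open U"
    unfolding U_def by (rule open_Collect_less) (intro continuous_intros)+
  have outside: "nderiv k v y = 0" if "y \<in> U" for k y
    using that
  proof (induction k arbitrary: y)
    case 0
    then show ?case
      using supp by (simp add: U_def)
  next
    case (Suc k)
    have "((\<lambda>_. 0) has_vector_derivative 0) (at y)"
      by (rule has_vector_derivative_const)
    then have "(nderiv k v has_vector_derivative 0) (at y)"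
      by (rule has_vector_derivative_transform_within_open[OF _ \<open>open U\<close> Suc.prems]) (simp add: Suc.IH)
    then show ?case
      unfolding nderiv_Suc by (rule vector_derivative_at)
  qed
  have "t \<in> closure U"
  proof (rule closure_approachable[THEN iffD2], intro allI impI)
    fix e :: real
    assume "0 < e"
    define y where "y = (if 0 \<le> t then t + e / 2 else t - e / 2)"
    have "y \<in> U" and "dist y t < e"
      using \<open>0 < e\<close> t by (auto simp: U_def y_def dist_real_def)
    then show "\<exists>y\<in>U. dist y t < e"
      by blast
  qed
  from continuous_constant_on_closure[OF smooth_fun_continuous_on[OF smooth] outside this] show ?thesis .
qed

lemma v_eq_0_outside: "r \<le> \<bar>t\<bar> \<Longrightarrow> v t = 0"
  using nderiv_eq_0_outside[of t 0] by simp

text \<open>Taylor expansion at the edge \<open>\<plusminus>r\<close> of the support, where all derivatives vanish.\<close>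
lemma norm_v_le_taylor:
  assumes D: "\<And>t. norm (nderiv (Suc p) v t) \<le> D"
  shows "norm (v t) \<le> D * r ^ Suc p / fact (Suc p)"
proof -
  have "0 \<le> D"
    using D by (rule bound_nonneg_of_norm_le)
  show ?thesis
  proof (cases "\<bar>t\<bar> < r")
    case False
    then show ?thesis
      using r_nonneg v_eq_0_outside[of t] \<open>0 \<le> D\<close> by simp
  next
    case True
    define c where "c = (if 0 \<le> t then r else - r)"
    have "nderiv i v c = 0" for i
      by (rule nderiv_eq_0_outside) (simp add: c_def r_nonneg)
    then have "norm (v t) \<le> D * \<bar>t - c\<bar> ^ Suc p / fact (Suc p)"
      using taylor_remainder_bound[of p "\<lambda>m. nderiv m v", OF smooth_fun_has_vector_derivative[OF smooth] D, of t c]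
      by simp
    also have "\<dots> \<le> D * r ^ Suc p / fact (Suc p)"
      using True \<open>0 \<le> D\<close> by (intro divide_right_mono mult_left_mono power_mono) (auto simp: c_def)
    finally show ?thesis .
  qed
qed

end

section \<open>The discretised kernel\<close>

text \<open>The basis function \<open>P\<^sub>j\<^sup>n\<close> without the indicator of its cell. It agrees with \<^const>\<open>Pbasis\<close>
  except at the right end point of the cell, and it is continuous.\<close>
definition scaled_legendre :: "real \<Rightarrow> int \<Rightarrow> nat \<Rightarrow> real \<Rightarrow> real" where
  "scaled_legendre \<eta> n j \<tau> = sqrt ((2 * real j + 1) / \<eta>) * legendre j (2 * ((\<tau> - of_int n * \<eta>) / \<eta>) - 1)"

lemma continuous_on_scaled_legendre [continuous_intros]:
  "0 < \<eta> \<Longrightarrow> continuous_on S (scaled_legendre \<eta> n j)"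
  unfolding scaled_legendre_def by (intro continuous_intros) auto

lemma orthonormal_family_scaled_legendre:
  assumes "0 < \<eta>"
  shows "orthonormal_family (of_int n * \<eta>) ((of_int n + 1) * \<eta>) J (scaled_legendre \<eta> n)"
proof
  fix j k
  define c where "c i = sqrt ((2 * real i + 1) / \<eta>)" for i
  have "integral {of_int n * \<eta> .. (of_int n + 1) * \<eta>} (\<lambda>\<tau>. scaled_legendre \<eta> n j \<tau> * scaled_legendre \<eta> n k \<tau>)
      = integral {of_int n * \<eta> .. (of_int n + 1) * \<eta>}
          (\<lambda>\<tau>. (\<lambda>y. c j * c k * (legendre j y * legendre k y)) (2 * ((\<tau> - of_int n * \<eta>) / \<eta>) - 1))"
    unfolding scaled_legendre_def c_def by (simp add: algebra_simps)
  also have "\<dots> = \<eta> / 2 * (c j * c k * integral {-1..1} (\<lambda>y. legendre j y * legendre k y))"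
    using assms by (subst integral_affine_to_standard_interval) (auto intro!: continuous_intros)
  also have "\<dots> = (if j = k then 1 else 0)"
  proof (cases "j = k")
    case True
    have cc: "c j * c k = (2 * real j + 1) / \<eta>"
      unfolding c_def True using assms by (simp add: real_sqrt_mult[symmetric])
    have norm: "integral {-1..1} (\<lambda>y. legendre j y * legendre k y) = 2 / (2 * real j + 1)"
      unfolding True by (rule legendre_norm)
    have "\<eta> / 2 * ((2 * real j + 1) / \<eta> * (2 / (2 * real j + 1))) = 1"
      using assms by (simp add: divide_simps)
    then show ?thesis
      unfolding cc norm using True by simp
  next
    case False
    then show ?thesis
      using legendre_orthogonal[OF False] by simp
  qed
  finally show "integral {of_int n * \<eta> .. (of_int n + 1) * \<eta>}
      (\<lambda>\<tau>. scaled_legendre \<eta> n j \<tau> * scaled_legendre \<eta> n k \<tau>) = (if j = k then 1 else 0)" .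
qed (use assms in \<open>intro continuous_intros\<close>)

lemma Ccoef_eq_integral_scaled_legendre:
  "Ccoef v \<eta> n j t
    = integral {of_int n * \<eta> .. (of_int n + 1) * \<eta>} (\<lambda>\<tau>. v (t - \<tau>) * complex_of_real (scaled_legendre \<eta> n j \<tau>))"
  unfolding Ccoef_def
proof (rule integral_spike[of "{(of_int n + 1) * \<eta>}"])
  fix \<tau>
  assume "\<tau> \<in> {of_int n * \<eta> .. (of_int n + 1) * \<eta>} - {(of_int n + 1) * \<eta>}"
  then have "of_int n * \<eta> \<le> \<tau> \<and> \<tau> < (of_int n + 1) * \<eta>"
    by auto
  then show "v (t - \<tau>) * complex_of_real (scaled_legendre \<eta> n j \<tau>) = v (t - \<tau>) * complex_of_real (Pbasis \<eta> n j \<tau>)"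
    unfolding Pbasis_def scaled_legendre_def by simp
qed simp

locale kernel_discretization = compactly_supported_smooth +
  fixes \<eta> :: real
  assumes eta_pos: "0 < \<eta>"
begin

definition cell :: "int \<Rightarrow> real set" where
  "cell n = {of_int n * \<eta> .. (of_int n + 1) * \<eta>}"

text \<open>The cells meeting \<open>[a - r, a + r]\<close>, outside of which \<open>\<tau> \<mapsto> v (a - \<tau>)\<close> vanishes.\<close>
definition cells :: "real \<Rightarrow> int set" where
  "cells a = {\<lfloor>(a - r) / \<eta>\<rfloor> .. \<lfloor>(a + r) / \<eta>\<rfloor>}"

definition cells_hull :: "real \<Rightarrow> real set" where
  "cells_hull a = {of_int \<lfloor>(a - r) / \<eta>\<rfloor> * \<eta> .. (of_int \<lfloor>(a + r) / \<eta>\<rfloor> + 1) * \<eta>}"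

lemma cells_nonempty: "\<lfloor>(a - r) / \<eta>\<rfloor> \<le> \<lfloor>(a + r) / \<eta>\<rfloor>"
  using eta_pos r_nonneg by (intro floor_mono divide_right_mono) auto

lemma card_cells: "real (card (cells a)) * \<eta> \<le> 2 * r + 2 * \<eta>"
proof -
  have "real (card (cells a)) = real_of_int (\<lfloor>(a + r) / \<eta>\<rfloor> - \<lfloor>(a - r) / \<eta>\<rfloor> + 1)"
    unfolding cells_def using cells_nonempty[of a] by simp
  also have "\<dots> \<le> (a + r) / \<eta> - (a - r) / \<eta> + 2"
    by linarith
  also have "\<dots> = 2 * r / \<eta> + 2"
    by (simp add: diff_divide_distrib[symmetric])
  finally show ?thesis
    using eta_pos by (simp add: field_simps)
qed

lemma v_eq_0_off_cells_hull:
  assumes "\<tau> \<notin> cells_hull a"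
  shows "v (a - \<tau>) = 0"
proof (rule v_eq_0_outside)
  have "of_int \<lfloor>(a - r) / \<eta>\<rfloor> * \<eta> \<le> a - r" and "a + r < (of_int \<lfloor>(a + r) / \<eta>\<rfloor> + 1) * \<eta>"
    using eta_pos by (simp_all add: pos_le_divide_eq[symmetric] pos_divide_less_eq[symmetric])
  then show "r \<le> \<bar>a - \<tau>\<bar>"
    using assms by (auto simp: cells_hull_def)
qed

lemma sum_integral_cells:
  fixes F :: "real \<Rightarrow> 'a::banach"
  assumes "continuous_on UNIV F"
  shows "(\<Sum>n\<in>cells a. integral (cell n) F) = integral (cells_hull a) F"
  unfolding cells_def cell_def cells_hull_def
  by (rule integral_consecutive_intervals[OF eta_pos cells_nonempty assms, symmetric])

lemma integral_UNIV_eq_sum_cells: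
  fixes F :: "real \<Rightarrow> 'a::banach"
  assumes "continuous_on UNIV F" and "\<And>\<tau>. v (a - \<tau>) = 0 \<Longrightarrow> F \<tau> = 0"
  shows "integral UNIV F = (\<Sum>n\<in>cells a. integral (cell n) F)"
proof -
  have "integral UNIV F = integral UNIV (\<lambda>\<tau>. if \<tau> \<in> cells_hull a then F \<tau> else 0)"
    using assms(2) v_eq_0_off_cells_hull by (intro integral_cong) auto
  also have "\<dots> = integral (cells_hull a) F"
    by (rule integral_restrict_UNIV)
  finally show ?thesis
    using sum_integral_cells[OF assms(1)] by simp
qed

lemma integral_norm_v_sq_le:
  assumes M: "\<And>t. norm (v t) \<le> M"
  shows "integral S (\<lambda>\<tau>. (norm (v (a - \<tau>)))\<^sup>2) \<le> M\<^sup>2 * (2 * r)"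
proof -
  have "integral S (\<lambda>\<tau>. (norm (v (a - \<tau>)))\<^sup>2) \<le> M\<^sup>2 * ((a + r) - (a - r))"
  proof (rule integral_le_indicator_bound)
    fix \<tau>
    show "(norm (v (a - \<tau>)))\<^sup>2 \<le> (if \<tau> \<in> {a - r .. a + r} then M\<^sup>2 else 0)"
      using M[of "a - \<tau>"] v_eq_0_outside[of "a - \<tau>"] by (auto intro: power_mono)
  qed (use r_nonneg in auto)
  then show ?thesis
    by simp
qed

lemma sum_cells_integral_norm_v_sq_le:
  assumes "\<And>t. norm (v t) \<le> M"
  shows "(\<Sum>n\<in>cells a. integral (cell n) (\<lambda>\<tau>. (norm (v (b - \<tau>)))\<^sup>2)) \<le> M\<^sup>2 * (2 * r)"
  using integral_norm_v_sq_le[OF assms] by (simp add: sum_integral_cells continuous_intros)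

lemma Ccoef_eq_0:
  assumes "\<And>\<tau>. \<tau> \<in> cell n \<Longrightarrow> r \<le> \<bar>a - \<tau>\<bar>"
  shows "Ccoef v \<eta> n j a = 0"
proof -
  have "Ccoef v \<eta> n j a = integral (cell n) (\<lambda>_. 0)"
    unfolding Ccoef_eq_integral_scaled_legendre cell_def[symmetric]
    using assms v_eq_0_outside by (intro integral_cong) simp
  then show ?thesis
    by simp
qed

lemma Ccoef_eq_0_off_cells:
  assumes "n \<notin> cells a"
  shows "Ccoef v \<eta> n j a = 0"
proof (rule Ccoef_eq_0)
  fix \<tau>
  assume \<tau>: "\<tau> \<in> cell n"
  show "r \<le> \<bar>a - \<tau>\<bar>"
  proof (cases "n < \<lfloor>(a - r) / \<eta>\<rfloor>")
    case True
    then have "of_int n + 1 \<le> (a - r) / \<eta>"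
      by linarith
    then have "(of_int n + 1) * \<eta> \<le> a - r"
      using eta_pos by (simp add: pos_le_divide_eq)
    then show ?thesis
      using \<tau> by (auto simp: cell_def)
  next
    case False
    then have "\<lfloor>(a + r) / \<eta>\<rfloor> < n"
      using assms by (auto simp: cells_def)
    then have "(a + r) / \<eta> < of_int n"
      by linarith
    then have "a + r < of_int n * \<eta>"
      using eta_pos by (simp add: pos_divide_less_eq)
    then show ?thesis
      using \<tau> by (auto simp: cell_def)
  qed
qed

lemma Kdisc_eq_sum_cells:
  assumes "a = s \<or> a = s'"
  shows "Kdisc v \<eta> J s s' = (\<Sum>n\<in>cells a. \<Sum>j\<le>J. Ccoef v \<eta> n j s * cnj (Ccoef v \<eta> n j s'))"
proof -
  have "Kdisc v \<eta> J s s' = infsum (\<lambda>n. \<Sum>j\<le>J. Ccoef v \<eta> n j s * cnj (Ccoef v \<eta> n j s')) (cells a)"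
    unfolding Kdisc_def
    using assms by (intro infsum_cong_neutral) (auto simp: Ccoef_eq_0_off_cells)
  then show ?thesis
    by (simp add: cells_def)
qed

lemma Kvac_eq_sum_cells:
  "Kvac v s s' = (\<Sum>n\<in>cells s'. integral (cell n) (\<lambda>\<tau>. v (s - \<tau>) * cnj (v (s' - \<tau>))))"
  unfolding Kvac_def by (rule integral_UNIV_eq_sum_cells) (auto intro!: continuous_intros)

lemma cell_error_le:
  assumes "0 < t"
  shows "norm ((\<Sum>j\<le>J. Ccoef v \<eta> n j s * cnj (Ccoef v \<eta> n j s'))
      - integral (cell n) (\<lambda>\<tau>. v (s - \<tau>) * cnj (v (s' - \<tau>))))
    \<le> (t * integral (cell n) (\<lambda>\<tau>. (norm (v (s - \<tau>) - (\<Sum>j\<le>J. d j * complex_of_real (scaled_legendre \<eta> n j \<tau>))))\<^sup>2)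
      + integral (cell n) (\<lambda>\<tau>. (norm (v (s' - \<tau>)))\<^sup>2) / t) / 2"
proof -
  interpret orthonormal_family "of_int n * \<eta>" "(of_int n + 1) * \<eta>" J "scaled_legendre \<eta> n"
    by (rule orthonormal_family_scaled_legendre[OF eta_pos])
  have "Ccoef v \<eta> n j a = coeff (\<lambda>\<tau>. v (a - \<tau>)) j" for j a
    unfolding coeff_def Ccoef_eq_integral_scaled_legendre ..
  then show ?thesis
    unfolding cell_def
    using coeff_inner_error_le[of "\<lambda>\<tau>. v (s - \<tau>)" "\<lambda>\<tau>. v (s' - \<tau>)" t d] \<open>0 < t\<close>
    by (simp add: continuous_intros)
qed

lemma integral_cell_nonneg:
  fixes F :: "real \<Rightarrow> real"
  assumes "continuous_on (cell n) F" and "\<And>\<tau>. 0 \<le> F \<tau>"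
  shows "0 \<le> integral (cell n) F"
  using assms by (intro integral_nonneg) (auto simp: cell_def intro: integrable_continuous_interval)

lemma norm_Kdisc_minus_Kvac_le_sqrt:
  assumes q: "\<And>n \<tau>. q n \<tau> = (\<Sum>j\<le>J. d n j * complex_of_real (scaled_legendre \<eta> n j \<tau>))"
  shows "norm (Kdisc v \<eta> J s s' - Kvac v s s')
    \<le> sqrt ((\<Sum>n\<in>cells s'. integral (cell n) (\<lambda>\<tau>. (norm (v (s - \<tau>) - q n \<tau>))\<^sup>2))
      * (\<Sum>n\<in>cells s'. integral (cell n) (\<lambda>\<tau>. (norm (v (s' - \<tau>)))\<^sup>2)))"
proof (rule le_sqrt_of_weighted_bound)
  fix t :: real
  assume "0 < t"
  have "norm (Kdisc v \<eta> J s s' - Kvac v s s')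
      = norm (\<Sum>n\<in>cells s'. (\<Sum>j\<le>J. Ccoef v \<eta> n j s * cnj (Ccoef v \<eta> n j s'))
          - integral (cell n) (\<lambda>\<tau>. v (s - \<tau>) * cnj (v (s' - \<tau>))))"
    by (simp add: Kdisc_eq_sum_cells[of s' s s'] Kvac_eq_sum_cells sum_subtractf)
  also have "\<dots> \<le> (\<Sum>n\<in>cells s'. (t * integral (cell n) (\<lambda>\<tau>. (norm (v (s - \<tau>) - q n \<tau>))\<^sup>2)
      + integral (cell n) (\<lambda>\<tau>. (norm (v (s' - \<tau>)))\<^sup>2) / t) / 2)"
    unfolding q using cell_error_le[OF \<open>0 < t\<close>] by (intro sum_norm_le) blast
  also have "\<dots> = (t * (\<Sum>n\<in>cells s'. integral (cell n) (\<lambda>\<tau>. (norm (v (s - \<tau>) - q n \<tau>))\<^sup>2))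
      + (\<Sum>n\<in>cells s'. integral (cell n) (\<lambda>\<tau>. (norm (v (s' - \<tau>)))\<^sup>2)) / t) / 2"
    by (simp only: sum_divide_distrib[symmetric] sum_distrib_left sum.distrib)
  finally show "norm (Kdisc v \<eta> J s s' - Kvac v s s')
    \<le> (t * (\<Sum>n\<in>cells s'. integral (cell n) (\<lambda>\<tau>. (norm (v (s - \<tau>) - q n \<tau>))\<^sup>2))
      + (\<Sum>n\<in>cells s'. integral (cell n) (\<lambda>\<tau>. (norm (v (s' - \<tau>)))\<^sup>2)) / t) / 2" .
qed (auto intro!: sum_nonneg integral_cell_nonneg continuous_intros simp: q eta_pos)

text \<open>Taylor expansion of \<open>v\<close> around \<open>s\<close> minus the midpoint of the cell; in the variable
  \<open>x \<in> [-1, 1]\<close> of the cell the Taylor polynomial has degree \<open>J\<close>, hence lies in the span of the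
  \<open>scaled_legendre \<eta> n j\<close>, \<open>j \<le> J\<close>.\<close>
lemma exists_cell_taylor_approximation:
  assumes D: "\<And>t. norm (nderiv (Suc J) v t) \<le> D"
  shows "\<exists>d. \<forall>\<tau>\<in>cell n. norm (v (s - \<tau>) - (\<Sum>j\<le>J. d j * complex_of_real (scaled_legendre \<eta> n j \<tau>)))
    \<le> D * (\<eta> / 2) ^ Suc J / fact (Suc J)"
proof -
  define c where "c = s - (of_int n * \<eta> + \<eta> / 2)"
  obtain e where e: "\<And>x. (\<Sum>i\<le>J. ((- (\<eta> / 2) * x + 0) ^ i / fact i) *\<^sub>R nderiv i v c)
      = (\<Sum>j\<le>J. e j * complex_of_real (legendre j x))"
    using legendre_span_polynomial[of J "- (\<eta> / 2)" 0 "\<lambda>i. nderiv i v c"]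
    unfolding legendre_span_def by blast
  define d where "d j = e j / complex_of_real (sqrt ((2 * real j + 1) / \<eta>))" for j
  have "norm (v (s - \<tau>) - (\<Sum>j\<le>J. d j * complex_of_real (scaled_legendre \<eta> n j \<tau>)))
      \<le> D * (\<eta> / 2) ^ Suc J / fact (Suc J)" if "\<tau> \<in> cell n" for \<tau>
  proof -
    define x where "x = 2 * ((\<tau> - of_int n * \<eta>) / \<eta>) - 1"
    have "s - \<tau> - c = - (\<eta> / 2) * x + 0"
      using eta_pos by (simp add: x_def c_def field_simps)
    moreover have "d j * complex_of_real (scaled_legendre \<eta> n j \<tau>) = e j * complex_of_real (legendre j x)" for j
      using eta_pos by (simp add: d_def scaled_legendre_def x_def)
    ultimately have "(\<Sum>j\<le>J. d j * complex_of_real (scaled_legendre \<eta> n j \<tau>))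
        = (\<Sum>i\<le>J. ((s - \<tau> - c) ^ i / fact i) *\<^sub>R nderiv i v c)"
      by (simp only: e)
    then have "norm (v (s - \<tau>) - (\<Sum>j\<le>J. d j * complex_of_real (scaled_legendre \<eta> n j \<tau>)))
        \<le> D * \<bar>s - \<tau> - c\<bar> ^ Suc J / fact (Suc J)"
      using taylor_remainder_bound[of J "\<lambda>m. nderiv m v", OF smooth_fun_has_vector_derivative[OF smooth] D]
      by simp
    also have "\<dots> \<le> D * (\<eta> / 2) ^ Suc J / fact (Suc J)"
    proof -
      have "\<bar>s - \<tau> - c\<bar> \<le> \<eta> / 2"
        using that by (auto simp: cell_def c_def field_simps abs_le_iff)
      moreover have "0 \<le> D"
        using D by (rule bound_nonneg_of_norm_le)
      ultimately show ?thesis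
        by (intro divide_right_mono mult_left_mono power_mono) auto
    qed
    finally show ?thesis .
  qed
  then show ?thesis
    by blast
qed

lemma exists_cellwise_taylor_error_le:
  assumes D: "\<And>t. norm (nderiv (Suc J) v t) \<le> D" and "\<eta> \<le> r"
  shows "\<exists>d. (\<Sum>n\<in>cells a. integral (cell n)
      (\<lambda>\<tau>. (norm (v (s - \<tau>) - (\<Sum>j\<le>J. d n j * complex_of_real (scaled_legendre \<eta> n j \<tau>))))\<^sup>2))
    \<le> 2 * r * (D * \<eta> ^ Suc J / fact (Suc J))\<^sup>2"
proof -
  define X where "X = D * \<eta> ^ Suc J / fact (Suc J)"
  define E where "E = D * (\<eta> / 2) ^ Suc J / fact (Suc J)"
  have "0 \<le> E"
    using bound_nonneg_of_norm_le[OF D] eta_pos by (simp add: E_def)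
  obtain d where d: "\<And>n \<tau>. \<tau> \<in> cell n \<Longrightarrow>
      norm (v (s - \<tau>) - (\<Sum>j\<le>J. d n j * complex_of_real (scaled_legendre \<eta> n j \<tau>))) \<le> E"
    using exists_cell_taylor_approximation[OF D, of _ s] unfolding E_def by metis
  have "integral (cell n) (\<lambda>\<tau>. (norm (v (s - \<tau>) - (\<Sum>j\<le>J. d n j * complex_of_real (scaled_legendre \<eta> n j \<tau>))))\<^sup>2)
      \<le> integral (cell n) (\<lambda>_. E\<^sup>2)" for n
    using d \<open>0 \<le> E\<close>
    by (intro integral_le power_mono)
      (auto simp: cell_def eta_pos intro!: integrable_continuous_interval continuous_intros)
  also have "integral (cell n) (\<lambda>_. E\<^sup>2) = \<eta> * E\<^sup>2" for n
    using eta_pos by (simp add: cell_def algebra_simps)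
  finally have "(\<Sum>n\<in>cells a. integral (cell n)
      (\<lambda>\<tau>. (norm (v (s - \<tau>) - (\<Sum>j\<le>J. d n j * complex_of_real (scaled_legendre \<eta> n j \<tau>))))\<^sup>2))
      \<le> real (card (cells a)) * \<eta> * E\<^sup>2"
    using sum_mono[of "cells a" _ "\<lambda>_. \<eta> * E\<^sup>2"] by (simp add: mult.assoc)
  also have "\<dots> \<le> (2 * r + 2 * \<eta>) * E\<^sup>2"
    using card_cells by (intro mult_right_mono) auto
  also have "\<dots> \<le> 4 * r * E\<^sup>2"
    using \<open>\<eta> \<le> r\<close> by (intro mult_right_mono) auto
  also have "\<dots> = r * (E * 2)\<^sup>2"
    by (simp add: power_mult_distrib mult_ac)
  also have "\<dots> \<le> r * X\<^sup>2"
  proof -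
    have "E * 2 \<le> E * 2 ^ Suc J"
      using \<open>0 \<le> E\<close> by (intro mult_left_mono) (simp_all add: self_le_power)
    also have "\<dots> = X"
      by (simp add: E_def X_def power_divide)
    finally show ?thesis
      using \<open>0 \<le> E\<close> r_nonneg by (intro mult_left_mono power_mono) auto
  qed
  also have "\<dots> \<le> 2 * r * X\<^sup>2"
    using r_nonneg by simp
  finally show ?thesis
    unfolding X_def by blast
qed

lemma exists_cellwise_approximation_error_le:
  assumes D: "\<And>t. norm (nderiv (Suc J) v t) \<le> D"
  shows "\<exists>d. (\<Sum>n\<in>cells a. integral (cell n)
      (\<lambda>\<tau>. (norm (v (s - \<tau>) - (\<Sum>j\<le>J. d n j * complex_of_real (scaled_legendre \<eta> n j \<tau>))))\<^sup>2))
    \<le> 2 * r * (D * \<eta> ^ Suc J / fact (Suc J))\<^sup>2"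
proof (cases "\<eta> \<le> r")
  case True
  then show ?thesis
    by (rule exists_cellwise_taylor_error_le[OF D])
next
  case False
  have "(\<Sum>n\<in>cells a. integral (cell n) (\<lambda>\<tau>. (norm (v (s - \<tau>)))\<^sup>2))
      \<le> (D * r ^ Suc J / fact (Suc J))\<^sup>2 * (2 * r)"
    using norm_v_le_taylor[OF D] by (rule sum_cells_integral_norm_v_sq_le)
  also have "\<dots> \<le> (D * \<eta> ^ Suc J / fact (Suc J))\<^sup>2 * (2 * r)"
    using False bound_nonneg_of_norm_le[OF D] r_nonneg
    by (intro mult_right_mono power_mono divide_right_mono mult_left_mono) auto
  finally show ?thesis
    by (intro exI[of _ "\<lambda>_ _. 0"]) (simp add: mult.commute)
qed

theorem norm_Kdisc_minus_Kvac_le: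
  assumes C0: "\<And>t. norm (v t) \<le> C0" and D: "\<And>t. norm (nderiv (Suc J) v t) \<le> D"
  shows "norm (Kdisc v \<eta> J s s' - Kvac v s s') \<le> 2 * \<eta> ^ Suc J * D * C0 * r / fact (Suc J)"
proof -
  define X where "X = D * \<eta> ^ Suc J / fact (Suc J)"
  define B where "B = (\<Sum>n\<in>cells s'. integral (cell n) (\<lambda>\<tau>. (norm (v (s' - \<tau>)))\<^sup>2))"
  obtain d where A: "(\<Sum>n\<in>cells s'. integral (cell n)
      (\<lambda>\<tau>. (norm (v (s - \<tau>) - (\<Sum>j\<le>J. d n j * complex_of_real (scaled_legendre \<eta> n j \<tau>))))\<^sup>2))
    \<le> 2 * r * X\<^sup>2"
    using exists_cellwise_approximation_error_le[OF D] unfolding X_def by blast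
  have "0 \<le> B"
    unfolding B_def by (intro sum_nonneg integral_cell_nonneg continuous_intros) auto
  have "2 * r * X\<^sup>2 * B \<le> 2 * r * X\<^sup>2 * (C0\<^sup>2 * (2 * r))"
    using sum_cells_integral_norm_v_sq_le[OF C0] r_nonneg unfolding B_def by (intro mult_left_mono) auto
  also have "\<dots> = (2 * r * X * C0)\<^sup>2"
    by (simp add: power2_eq_square mult_ac)
  finally have AB: "2 * r * X\<^sup>2 * B \<le> (2 * r * X * C0)\<^sup>2" .
  have "norm (Kdisc v \<eta> J s s' - Kvac v s s')
      \<le> sqrt ((\<Sum>n\<in>cells s'. integral (cell n)
          (\<lambda>\<tau>. (norm (v (s - \<tau>) - (\<Sum>j\<le>J. d n j * complex_of_real (scaled_legendre \<eta> n j \<tau>))))\<^sup>2)) * B)"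
    unfolding B_def by (rule norm_Kdisc_minus_Kvac_le_sqrt) (rule refl)
  also have "\<dots> \<le> sqrt ((2 * r * X * C0)\<^sup>2)"
    using \<open>0 \<le> B\<close> by (intro real_sqrt_le_mono order_trans[OF mult_right_mono[OF A] AB])
  also have "\<dots> = 2 * r * X * C0"
    using r_nonneg eta_pos bound_nonneg_of_norm_le[OF D] bound_nonneg_of_norm_le[OF C0] by (simp add: X_def)
  finally show ?thesis
    by (simp add: X_def mult_ac)
qed

lemma Kdisc_eq_Kvac_far:
  assumes far: "2 * r + \<eta> < \<bar>s - s'\<bar>"
  shows "Kdisc v \<eta> J s s' = Kvac v s s'"
proof -
  have product_0: "Ccoef v \<eta> n j s * cnj (Ccoef v \<eta> n j s') = 0" for n j
  proof (cases "\<forall>\<tau>\<in>cell n. r \<le> \<bar>s - \<tau>\<bar>")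
    case True
    then show ?thesis
      by (simp add: Ccoef_eq_0)
  next
    case False
    then obtain \<tau>\<^sub>0 where \<tau>\<^sub>0: "\<tau>\<^sub>0 \<in> cell n" "\<bar>s - \<tau>\<^sub>0\<bar> < r"
      by auto
    have "r \<le> \<bar>s' - \<tau>\<bar>" if "\<tau> \<in> cell n" for \<tau>
    proof -
      have "\<bar>\<tau> - \<tau>\<^sub>0\<bar> \<le> \<eta>"
        using that \<tau>\<^sub>0(1) by (auto simp: cell_def distrib_right abs_le_iff)
      then show ?thesis
        using far \<tau>\<^sub>0(2) by linarith
    qed
    then show ?thesis
      by (simp add: Ccoef_eq_0)
  qed
  then have "Kdisc v \<eta> J s s' = 0"
    unfolding Kdisc_def product_0 by simp
  moreover have integrand_0: "v (s - \<tau>) * cnj (v (s' - \<tau>)) = 0" for \<tau>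
    using far r_nonneg eta_pos v_eq_0_outside[of "s - \<tau>"] v_eq_0_outside[of "s' - \<tau>"] by fastforce
  then have "Kvac v s s' = 0"
    unfolding Kvac_def integrand_0 by simp
  ultimately show ?thesis
    by simp
qed

lemma integral_integral_norm_Kdisc_minus_Kvac_le:
  assumes C0: "\<And>t. norm (v t) \<le> C0" and D: "\<And>t. norm (nderiv (Suc J) v t) \<le> D" and "0 < t"
  shows "integral {0..t} (\<lambda>s'. integral {0..t} (\<lambda>s. norm (Kdisc v \<eta> J s s' - Kvac v s s')))
    \<le> 4 * t * \<eta> ^ Suc J * D * (2 * r + \<eta>) / fact (Suc J) * C0 * r"
proof -
  define E where "E = 2 * \<eta> ^ Suc J * D * C0 * r / fact (Suc J)"
  define W where "W = 2 * r + \<eta>"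
  have "0 \<le> E"
    using bound_nonneg_of_norm_le[OF C0] bound_nonneg_of_norm_le[OF D] r_nonneg eta_pos
    by (simp add: E_def)
  have "0 \<le> W"
    using r_nonneg eta_pos by (simp add: W_def)
  have inner: "integral {0..t} (\<lambda>s. norm (Kdisc v \<eta> J s s' - Kvac v s s')) \<le> E * ((s' + W) - (s' - W))" for s'
  proof (rule integral_le_indicator_bound)
    fix s
    show "norm (Kdisc v \<eta> J s s' - Kvac v s s') \<le> (if s \<in> {s' - W .. s' + W} then E else 0)"
      using norm_Kdisc_minus_Kvac_le[OF C0 D, of s s'] Kdisc_eq_Kvac_far[of s s' J]
      by (auto simp: E_def W_def abs_if)
  qed (use \<open>0 \<le> E\<close> \<open>0 \<le> W\<close> in auto)
  have "integral {0..t} (\<lambda>s'. integral {0..t} (\<lambda>s. norm (Kdisc v \<eta> J s s' - Kvac v s s')))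
      \<le> E * (2 * W) * (t - 0)"
    using inner \<open>0 \<le> E\<close> \<open>0 \<le> W\<close> \<open>0 < t\<close> by (intro integral_le_indicator_bound) auto
  also have "\<dots> = 4 * t * \<eta> ^ Suc J * D * (2 * r + \<eta>) / fact (Suc J) * C0 * r"
    by (simp add: E_def W_def field_simps)
  finally show ?thesis .
qed

text \<open>Pointwise \<open>\<bar>P\<bar> \<le> (\<surd>\<eta> P\<^sup>2 + 1 / \<surd>\<eta>) / 2\<close>; integrated over a cell of length \<open>\<eta>\<close>,
  on which \<open>P\<close> has unit \<open>L\<^sup>2\<close> norm, this gives the Cauchy-Schwarz bound.\<close>
lemma norm_Ccoef_le:
  assumes C0: "\<And>t. norm (v t) \<le> C0"
  shows "norm (Ccoef v \<eta> n j a) \<le> C0 * sqrt \<eta>"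
proof -
  define q where "q = sqrt \<eta>"
  have "0 < q" and "q * q = \<eta>"
    using eta_pos by (simp_all add: q_def)
  have "0 \<le> C0"
    using C0 by (rule bound_nonneg_of_norm_le)
  define g where "g \<tau> = C0 * q / 2 * (scaled_legendre \<eta> n j \<tau> * scaled_legendre \<eta> n j \<tau>) + C0 / (2 * q)" for \<tau>
  have "norm (Ccoef v \<eta> n j a) \<le> integral (cell n) g"
    unfolding Ccoef_eq_integral_scaled_legendre cell_def[symmetric]
  proof (rule integral_norm_bound_integral)
    show "(\<lambda>\<tau>. v (a - \<tau>) * complex_of_real (scaled_legendre \<eta> n j \<tau>)) integrable_on cell n"
      and "g integrable_on cell n"
      unfolding cell_def g_def by (auto intro!: integrable_continuous_interval continuous_intros simp: eta_pos)
    fix \<tau>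
    have "norm (v (a - \<tau>) * complex_of_real (scaled_legendre \<eta> n j \<tau>)) \<le> C0 * \<bar>scaled_legendre \<eta> n j \<tau>\<bar>"
      using C0 by (simp add: norm_mult mult_right_mono)
    also have "\<dots> \<le> C0 * ((q * \<bar>scaled_legendre \<eta> n j \<tau>\<bar>\<^sup>2 + 1\<^sup>2 / q) / 2)"
      using weighted_amgm[OF \<open>0 < q\<close>, of "\<bar>scaled_legendre \<eta> n j \<tau>\<bar>" 1] \<open>0 \<le> C0\<close>
      by (intro mult_left_mono) auto
    also have "\<dots> = g \<tau>"
      using \<open>0 < q\<close> by (simp add: g_def field_simps power2_eq_square)
    finally show "norm (v (a - \<tau>) * complex_of_real (scaled_legendre \<eta> n j \<tau>)) \<le> g \<tau>" .
  qed
  also have "integral (cell n) g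
      = C0 * q / 2 * integral (cell n) (\<lambda>\<tau>. scaled_legendre \<eta> n j \<tau> * scaled_legendre \<eta> n j \<tau>)
        + integral (cell n) (\<lambda>\<tau>. C0 / (2 * q))"
    unfolding g_def cell_def
    by (subst integral_add) (auto intro!: integrable_continuous_interval continuous_intros simp: eta_pos)
  also have "integral (cell n) (\<lambda>\<tau>. scaled_legendre \<eta> n j \<tau> * scaled_legendre \<eta> n j \<tau>) = 1"
    using orthonormal_family.orthonormal[OF orthonormal_family_scaled_legendre[OF eta_pos, of n j], of j j]
    by (simp add: cell_def)
  also have "integral (cell n) (\<lambda>\<tau>. C0 / (2 * q)) = \<eta> * (C0 / (2 * q))"
    using eta_pos by (simp add: cell_def algebra_simps)
  also have "C0 * q / 2 * 1 + \<eta> * (C0 / (2 * q)) = C0 * q"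
    using \<open>0 < q\<close> \<open>q * q = \<eta>\<close> by (simp add: field_simps)
  finally show ?thesis
    unfolding q_def .
qed

lemma norm_Kdisc_le_indicators:
  assumes C0: "\<And>t. norm (v t) \<le> C0"
  shows "norm (Kdisc v \<eta> J s s')
    \<le> (\<Sum>n\<in>cells s. if s' \<in> {of_int n * \<eta> - r .. (of_int n + 1) * \<eta> + r} then (real J + 1) * (C0\<^sup>2 * \<eta>) else 0)"
proof -
  have "norm (Ccoef v \<eta> n j s * cnj (Ccoef v \<eta> n j s'))
      \<le> (if s' \<in> {of_int n * \<eta> - r .. (of_int n + 1) * \<eta> + r} then C0\<^sup>2 * \<eta> else 0)" for n j
  proof (cases "s' \<in> {of_int n * \<eta> - r .. (of_int n + 1) * \<eta> + r}")
    case True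
    have "norm (Ccoef v \<eta> n j s * cnj (Ccoef v \<eta> n j s')) \<le> (C0 * sqrt \<eta>) * (C0 * sqrt \<eta>)"
      unfolding norm_mult complex_mod_cnj
      using norm_Ccoef_le[OF C0] bound_nonneg_of_norm_le[OF C0] eta_pos by (intro mult_mono) auto
    then show ?thesis
      using True eta_pos by (simp add: power2_eq_square mult_ac)
  next
    case False
    then have "Ccoef v \<eta> n j s' = 0"
      by (intro Ccoef_eq_0) (auto simp: cell_def)
    then show ?thesis
      using False by auto
  qed
  then have "norm (Kdisc v \<eta> J s s')
      \<le> (\<Sum>n\<in>cells s. \<Sum>j\<le>J. if s' \<in> {of_int n * \<eta> - r .. (of_int n + 1) * \<eta> + r} then C0\<^sup>2 * \<eta> else 0)"
    unfolding Kdisc_eq_sum_cells[of s s s' J, OF disjI1[OF refl]]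
    by (intro order_trans[OF norm_sum sum_mono] order_trans[OF norm_sum sum_mono])
  then show ?thesis
    by (simp add: if_distrib algebra_simps cong: if_cong)
qed

lemma integral_norm_Kdisc_le:
  assumes C0: "\<And>t. norm (v t) \<le> C0" and "\<eta> \<le> 1"
  shows "integral UNIV (\<lambda>s'. norm (Kdisc v \<eta> J s s')) \<le> 2 * C0\<^sup>2 * (real J + 1) * (2 * r + 1)\<^sup>2"
proof -
  define K where "K = (real J + 1) * (C0\<^sup>2 * \<eta>)"
  define G where "G s' = (\<Sum>n\<in>cells s. if s' \<in> {of_int n * \<eta> - r .. (of_int n + 1) * \<eta> + r} then K else 0)" for s'
  have "0 \<le> K"
    using eta_pos by (simp add: K_def)
  have G: "(G has_integral (\<Sum>n\<in>cells s. K * (((of_int n + 1) * \<eta> + r) - (of_int n * \<eta> - r)))) UNIV"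
    unfolding G_def using r_nonneg eta_pos
    by (intro has_integral_sum has_integral_indicator_interval) (auto simp: cells_def algebra_simps)
  have "norm (Kdisc v \<eta> J s s') \<le> G s'" for s'
    unfolding G_def K_def by (rule norm_Kdisc_le_indicators[OF C0])
  then have "integral UNIV (\<lambda>s'. norm (Kdisc v \<eta> J s s')) \<le> integral UNIV G"
    using G \<open>0 \<le> K\<close> by (intro integral_le_integral_UNIV) (auto simp: G_def intro!: sum_nonneg)
  also have "\<dots> = real (card (cells s)) * \<eta> * ((real J + 1) * C0\<^sup>2 * (\<eta> + 2 * r))"
    using integral_unique[OF G] by (simp add: K_def algebra_simps)
  also have "\<dots> \<le> (2 * r + 2 * \<eta>) * ((real J + 1) * C0\<^sup>2 * (\<eta> + 2 * r))"
    using card_cells eta_pos r_nonneg by (intro mult_right_mono) auto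
  also have "\<dots> \<le> (2 * (2 * r + 1)) * ((real J + 1) * C0\<^sup>2 * (2 * r + 1))"
    using eta_pos r_nonneg \<open>\<eta> \<le> 1\<close> by (intro mult_mono mult_left_mono) auto
  also have "\<dots> = 2 * C0\<^sup>2 * (real J + 1) * (2 * r + 1)\<^sup>2"
    by (simp add: power2_eq_square algebra_simps)
  finally show ?thesis .
qed

end

theorem lemma2:
  fixes v :: "real \<Rightarrow> complex" and r C0 D \<eta> :: real and jmax :: nat
  assumes smooth: "smooth_fun v"
    and r: "0 \<le> r"
    and supp: "\<And>t. \<bar>t\<bar> > r \<Longrightarrow> v t = 0"
    and C0: "\<And>t. norm (v t) \<le> C0"
    and D: "\<And>t. norm (nderiv (jmax + 1) v t) \<le> D"
    and eta: "0 < \<eta>" "\<eta> \<le> 1"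
  shows "(\<forall>s s'. norm (Kdisc v \<eta> jmax s s' - Kvac v s s')
            \<le> 2 * \<eta> ^ (jmax + 1) * D * C0 * r / fact (jmax + 1))
       \<and> (\<forall>t>0. integral {0..t} (\<lambda>s'. integral {0..t} (\<lambda>s. norm (Kdisc v \<eta> jmax s s' - Kvac v s s')))
            \<le> 4 * t * \<eta> ^ (jmax + 1) * D * (2 * r + \<eta>) / fact (jmax + 1) * C0 * r)
       \<and> (\<forall>s. integral UNIV (\<lambda>s'. norm (Kdisc v \<eta> jmax s s'))
            \<le> 2 * C0\<^sup>2 * (real jmax + 1) * (2 * r + 1)\<^sup>2)"
proof -
  interpret kernel_discretization v r \<eta>
    using smooth r supp eta(1) by unfold_locales
  have D': "\<And>t. norm (nderiv (Suc jmax) v t) \<le> D"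
    using D by simp
  show ?thesis
    using norm_Kdisc_minus_Kvac_le[OF C0 D'] integral_integral_norm_Kdisc_minus_Kvac_le[OF C0 D']
      integral_norm_Kdisc_le[OF C0 eta(2)]
    by simp
qed

end
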